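(* Let $\mathcal H$ be a finite-dimensional Hilbert space, $|\theta\rangle\in\mathcal H$ a pure state, $0\le r\le n/2$, and $\varrho_n\in\mathrm{conv}(|\theta\rangle^{[\otimes,n,r]})$. Let $\mathcal M=\{M_w\}_{w\in W}$ be a POVM on $\mathcal H$ with finite outcome set $W$, let $P_{\mathcal M}(|\theta\rangle\langle\theta|)=\{\langle\theta|M_w|\theta\rangle\}_{w\in W}$, and let $P_{\mathcal M}[\varrho_n]$ be the relative frequency distribution of outcomes of $\mathcal M^{\otimes n}$ applied to $\varrho_n$. Then for every $\delta>0$, $$\Pr\Big(\big\|P_{\mathcal M}(|\theta\rangle\langle\theta|)-P_{\mathcal M}[\varrho_n]\big\|>\delta\Big)\le 2^{-n\left[\frac{\delta^2}{4}-H\left(\frac rn\right)\right]+|W|\log\left(\frac n2+1\right)},$$ where the probability is over the measurement outcomes.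
   Context: For $0\le r\le N$, $\mathrm{Sym}(\mathcal H^{\otimes N})$ is the symmetric subspace, $\mathcal V(\mathcal H^{\otimes N},|\theta\rangle^{\otimes N-r})=\{\pi(|\theta\rangle^{\otimes N-r}\otimes|\psi_r\rangle):\pi\in S_N,\ |\psi_r\rangle\in\mathcal H^{\otimes r}\}$, $|\theta\rangle^{[\otimes,N,r]}:=\mathrm{Sym}(\mathcal H^{\otimes N})\cap\mathrm{span}(\mathcal V(\mathcal H^{\otimes N},|\theta\rangle^{\otimes N-r}))$ (almost power states along $|\theta\rangle$), and $\mathrm{conv}(|\theta\rangle^{[\otimes,N,r]})$ is the set of mixtures of such pure states. $\|\cdot\|$ on distributions is the $\ell_1$ distance, $H$ is the binary entropy, $\log$ is base 2. *)

theory Defs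
  imports Complex_Main "HOL-Combinatorics.Permutations"
begin

text \<open>The Hilbert space H is C^d (d \<ge> 1); a vector of H is a function
  nat \<Rightarrow> complex, only its values on indices < d matter. A vector of H^{\<otimes>N} is a function
  nat list \<Rightarrow> complex, only its values on the multi-indices in idx d N matter.\<close>

definition idx :: "nat \<Rightarrow> nat \<Rightarrow> nat list set" where
  "idx d N = {xs. length xs = N \<and> set xs \<subseteq> {..<d}}"

definition hinner :: "nat \<Rightarrow> (nat \<Rightarrow> complex) \<Rightarrow> (nat \<Rightarrow> complex) \<Rightarrow> complex" where
  "hinner d u v = (\<Sum>i<d. cnj (u i) * v i)"

definition tinner :: "nat \<Rightarrow> nat \<Rightarrow> (nat list \<Rightarrow> complex) \<Rightarrow> (nat list \<Rightarrow> complex) \<Rightarrow> complex" where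
  "tinner d N u v = (\<Sum>xs\<in>idx d N. cnj (u xs) * v xs)"

definition power_tensor :: "(nat \<Rightarrow> complex) \<Rightarrow> nat \<Rightarrow> (nat list \<Rightarrow> complex) \<Rightarrow> (nat list \<Rightarrow> complex)" where
  "power_tensor \<theta> k \<psi> = (\<lambda>xs. (\<Prod>i<k. \<theta> (xs ! i)) * \<psi> (drop k xs))"

definition perm_vec :: "(nat \<Rightarrow> nat) \<Rightarrow> (nat list \<Rightarrow> complex) \<Rightarrow> (nat list \<Rightarrow> complex)" where
  "perm_vec \<pi> v = (\<lambda>xs. v (permute_list \<pi> xs))"

definition Vset :: "nat \<Rightarrow> (nat \<Rightarrow> complex) \<Rightarrow> nat \<Rightarrow> nat \<Rightarrow> (nat list \<Rightarrow> complex) set" where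
  "Vset d \<theta> N r = {perm_vec \<pi> (power_tensor \<theta> (N - r) \<psi>) | \<pi> \<psi>. \<pi> permutes {..<N}}"

definition in_tspan :: "nat \<Rightarrow> nat \<Rightarrow> (nat list \<Rightarrow> complex) set \<Rightarrow> (nat list \<Rightarrow> complex) \<Rightarrow> bool" where
  "in_tspan d N S v \<longleftrightarrow> (\<exists>F c. finite F \<and> F \<subseteq> S \<and>
      (\<forall>xs\<in>idx d N. v xs = (\<Sum>u\<in>F. c u * u xs)))"

definition symmetric_vec :: "nat \<Rightarrow> nat \<Rightarrow> (nat list \<Rightarrow> complex) \<Rightarrow> bool" where
  "symmetric_vec d N v \<longleftrightarrow> (\<forall>\<pi>. \<pi> permutes {..<N} \<longrightarrow> (\<forall>xs\<in>idx d N. perm_vec \<pi> v xs = v xs))"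

definition almost_power :: "nat \<Rightarrow> (nat \<Rightarrow> complex) \<Rightarrow> nat \<Rightarrow> nat \<Rightarrow> (nat list \<Rightarrow> complex) set" where
  "almost_power d \<theta> N r = {v. symmetric_vec d N v \<and> in_tspan d N (Vset d \<theta> N r) v}"

definition is_POVM :: "nat \<Rightarrow> 'w set \<Rightarrow> ('w \<Rightarrow> nat \<Rightarrow> nat \<Rightarrow> complex) \<Rightarrow> bool" where
  "is_POVM d W M \<longleftrightarrow> finite W \<and> W \<noteq> {} \<and>
     (\<forall>w\<in>W. \<forall>v. (\<Sum>i<d. \<Sum>j<d. cnj (v i) * M w i j * v j) \<in> \<real> \<and>
                  Re (\<Sum>i<d. \<Sum>j<d. cnj (v i) * M w i j * v j) \<ge> 0) \<and>
     (\<forall>i<d. \<forall>j<d. (\<Sum>w\<in>W. M w i j) = (if i = j then 1 else 0))"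

definition outcome_dist :: "nat \<Rightarrow> ('w \<Rightarrow> nat \<Rightarrow> nat \<Rightarrow> complex) \<Rightarrow> (nat \<Rightarrow> complex) \<Rightarrow> 'w \<Rightarrow> real" where
  "outcome_dist d M \<theta> w = Re (\<Sum>i<d. \<Sum>j<d. cnj (\<theta> i) * M w i j * \<theta> j)"

definition born_prob :: "nat \<Rightarrow> nat \<Rightarrow> ('w \<Rightarrow> nat \<Rightarrow> nat \<Rightarrow> complex) \<Rightarrow> 'w list \<Rightarrow> (nat list \<Rightarrow> complex) \<Rightarrow> real" where
  "born_prob d n M ws \<phi> = Re (\<Sum>xs\<in>idx d n. \<Sum>ys\<in>idx d n.
      cnj (\<phi> xs) * (\<Prod>i<n. M (ws ! i) (xs ! i) (ys ! i)) * \<phi> ys)"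

definition rel_freq :: "'w list \<Rightarrow> 'w \<Rightarrow> real" where
  "rel_freq ws w = real (count_list ws w) / real (length ws)"

definition l1_dist :: "'w set \<Rightarrow> ('w \<Rightarrow> real) \<Rightarrow> ('w \<Rightarrow> real) \<Rightarrow> real" where
  "l1_dist W p q = (\<Sum>w\<in>W. \<bar>p w - q w\<bar>)"

definition bin_entropy :: "real \<Rightarrow> real" where
  "bin_entropy x = (if x \<le> 0 \<or> x \<ge> 1 then 0 else - x * log 2 x - (1 - x) * log 2 (1 - x))"

end

theory Submission
  imports Defs "HOL-Probability.Hoeffding"
begin

text \<open>
  For S \<subseteq> {..<n} let P_S (below: tensor_op d n (proj_factor \<theta> S)) be the product projection
  acting as 1 - |\<theta>\<rangle>\<langle>\<theta>| on the factors in S and as |\<theta>\<rangle>\<langle>\<theta>| on the others. These 2^n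
  projections resolve the identity, and P_S annihilates every almost power state once |S| > r,
  because one of its factors 1 - |\<theta>\<rangle>\<langle>\<theta>| then meets one of the n - r factors |\<theta>\<rangle>.
  So an almost power state \<phi> is the sum of the at most 2^(n H(r/n)) vectors P_S \<phi> with
  |S| \<le> r, and by Cauchy-Schwarz its outcome probabilities are at most 2^(n H(r/n)) times the
  sum of those of the P_S \<phi>. In P_S \<phi> the factors outside S are in the state \<theta>, so an
  exponential moment (Chernoff) bound, in which each of the |S| \<le> r remaining factors costs
  at most a factor e^l, shows that the frequency of a fixed set A of outcomes exceeds
  P(A) + \<delta>/2 with probability at most e^(-n\<delta>^2/4) |P_S \<phi>|^2. An l1 deviation larger than
  \<delta> forces this for the set A of over-represented outcomes, and a union bound over the at
  most (n/2 + 1)^|W| candidate sets A concludes. When n\<delta>^2/4 \<le> 2r the bound is at least 1,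
  since H(x) \<ge> 2x for x \<le> 1/2.
\<close>

section \<open>Multi-indices\<close>

definition lists_of :: "'a set \<Rightarrow> nat \<Rightarrow> 'a list set" where
  "lists_of D n = {xs. length xs = n \<and> set xs \<subseteq> D}"

lemma idx_eq_lists_of: "idx d n = lists_of {..<d} n"
  by (simp add: idx_def lists_of_def)

lemma finite_lists_of: "finite D \<Longrightarrow> finite (lists_of D n)"
  unfolding lists_of_def using finite_lists_length_eq[of D n] by (simp add: conj_commute)

lemma lists_of_Suc: "lists_of D (Suc n) = (\<lambda>(y,ys). y # ys) ` (D \<times> lists_of D n)"
proof -
  have "xs \<in> (\<lambda>(y,ys). y # ys) ` (D \<times> lists_of D n)" if "xs \<in> lists_of D (Suc n)" for xs
    using that by (cases xs) (auto simp: lists_of_def)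
  then show ?thesis by (auto simp: lists_of_def)
qed

lemma sum_lists_of_prod:
  assumes "finite D"
  shows "(\<Sum>ys\<in>lists_of D n. \<Prod>i<n. g i (ys!i)) = (\<Prod>i<n. \<Sum>y\<in>D. (g i y :: 'b::comm_semiring_1))"
proof (induction n arbitrary: g)
  case 0
  have "lists_of D 0 = {[]}" by (auto simp: lists_of_def)
  then show ?case by simp
next
  case (Suc n)
  have inj: "inj_on (\<lambda>(y,ys). y # ys) (D \<times> lists_of D n)" by (auto simp: inj_on_def)
  have "(\<Sum>ys\<in>lists_of D (Suc n). \<Prod>i<Suc n. g i (ys!i))
      = (\<Sum>(y,ys)\<in>D \<times> lists_of D n. \<Prod>i<Suc n. g i ((y#ys)!i))"
    unfolding lists_of_Suc by (subst sum.reindex[OF inj]) (simp add: case_prod_unfold)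
  also have "\<dots> = (\<Sum>(y,ys)\<in>D \<times> lists_of D n. g 0 y * (\<Prod>i<n. g (Suc i) (ys!i)))"
    by (intro sum.cong refl) (auto simp del: prod.lessThan_Suc simp add: prod.lessThan_Suc_shift)
  also have "\<dots> = (\<Sum>y\<in>D. g 0 y) * (\<Sum>ys\<in>lists_of D n. \<Prod>i<n. g (Suc i) (ys!i))"
    by (simp add: sum.cartesian_product[symmetric] sum_product)
  also have "\<dots> = (\<Sum>y\<in>D. g 0 y) * (\<Prod>i<n. \<Sum>y\<in>D. g (Suc i) y)"
    using Suc[of "\<lambda>i. g (Suc i)"] by simp
  also have "\<dots> = (\<Prod>i<Suc n. \<Sum>y\<in>D. g i y)"
    by (simp del: prod.lessThan_Suc add: prod.lessThan_Suc_shift)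
  finally show ?case .
qed

lemma idx_nth_less: "xs \<in> idx d n \<Longrightarrow> i < n \<Longrightarrow> xs ! i < d"
  unfolding idx_def using nth_mem by fastforce

lemma finite_idx: "finite (idx d n)"
  by (simp add: idx_eq_lists_of finite_lists_of)

lemma sum_idx_prod:
  "(\<Sum>ys\<in>idx d n. \<Prod>i<n. g i (ys!i)) = (\<Prod>i<n. \<Sum>y<d. (g i y :: 'b::comm_semiring_1))"
  unfolding idx_eq_lists_of by (rule sum_lists_of_prod) simp

lemma sum2_idx_prod:
  "(\<Sum>xs\<in>idx d n. \<Sum>ys\<in>idx d n. \<Prod>i<n. f i (xs!i) (ys!i)) = (\<Prod>i<n. \<Sum>x<d. \<Sum>y<d. (f i x y :: 'b::comm_semiring_1))"
proof -
  have "(\<Sum>xs\<in>idx d n. \<Sum>ys\<in>idx d n. \<Prod>i<n. f i (xs!i) (ys!i)) = (\<Sum>xs\<in>idx d n. \<Prod>i<n. \<Sum>y<d. f i (xs!i) y)"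
    by (rule sum.cong[OF refl], rule sum_idx_prod)
  also have "\<dots> = (\<Prod>i<n. \<Sum>x<d. \<Sum>y<d. f i x y)"
    by (rule sum_idx_prod)
  finally show ?thesis .
qed

lemma idx_update: "ys \<in> idx d n \<Longrightarrow> y < d \<Longrightarrow> ys[j := y] \<in> idx d n"
  unfolding idx_def using set_update_subset_insert by fastforce

lemma sum_idx_coord_zero:
  assumes j: "j < n" and g0: "(\<Sum>y<d. g y) = 0"
    and R: "\<And>ys y. ys \<in> idx d n \<Longrightarrow> y < d \<Longrightarrow> R (ys[j := y]) = R ys"
  shows "(\<Sum>ys\<in>idx d n. g (ys!j) * R ys) = (0::complex)"
proof (cases "d = 0")
  case True
  have "idx d n = {}" using True j by (auto simp: idx_def)
  then show ?thesis by simp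
next
  case False
  define C where "C = (\<Sum>ys\<in>{ys\<in>idx d n. ys!j = 0}. R ys)"
  have len: "ys \<in> idx d n \<Longrightarrow> length ys = n" for ys by (simp add: idx_def)
  have inner: "(\<Sum>ys\<in>{ys\<in>idx d n. ys!j = y}. R ys) = C" if y: "y < d" for y
    unfolding C_def
  proof (rule sum.reindex_bij_witness[where i="\<lambda>ys. ys[j := y]" and j="\<lambda>ys. ys[j := 0]"])
    fix ys assume a: "ys \<in> {ys\<in>idx d n. ys!j = y}"
    then show "(ys[j := 0])[j := y] = ys" "ys[j := 0] \<in> {ys\<in>idx d n. ys!j = 0}"
      using False j len by (auto simp: idx_update)
    show "R (ys[j := 0]) = R ys" using a False R by auto
  next
    fix ys assume a: "ys \<in> {ys\<in>idx d n. ys!j = 0}"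
    then have e: "ys[j := 0] = ys" by (metis (mono_tags) list_update_id mem_Collect_eq)
    show "(ys[j := y])[j := 0] = ys" "ys[j := y] \<in> {ys\<in>idx d n. ys!j = y}"
      using a e y j len by (auto simp: idx_update)
  qed
  have "(\<Sum>ys\<in>idx d n. g (ys!j) * R ys) = (\<Sum>y<d. \<Sum>ys\<in>{ys\<in>idx d n. ys!j = y}. g (ys!j) * R ys)"
    by (rule sum.group[symmetric]) (auto simp: finite_idx idx_nth_less j)
  also have "\<dots> = (\<Sum>y<d. g y * C)"
    by (intro sum.cong refl) (simp add: sum_distrib_left[symmetric] inner)
  also have "\<dots> = 0" using g0 by (simp add: sum_distrib_right[symmetric])
  finally show ?thesis .
qed

lemma sum4_swap:
  "(\<Sum>x\<in>A. \<Sum>y\<in>B. \<Sum>a\<in>C. \<Sum>b\<in>D. f x y a b) = (\<Sum>a\<in>C. \<Sum>b\<in>D. \<Sum>x\<in>A. \<Sum>y\<in>B. f x y a b)"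
proof -
  have "(\<Sum>x\<in>A. \<Sum>y\<in>B. \<Sum>a\<in>C. \<Sum>b\<in>D. f x y a b) = (\<Sum>x\<in>A. \<Sum>a\<in>C. \<Sum>y\<in>B. \<Sum>b\<in>D. f x y a b)"
    by (rule sum.cong[OF refl], rule sum.swap)
  also have "\<dots> = (\<Sum>a\<in>C. \<Sum>x\<in>A. \<Sum>y\<in>B. \<Sum>b\<in>D. f x y a b)" by (rule sum.swap)
  also have "\<dots> = (\<Sum>a\<in>C. \<Sum>x\<in>A. \<Sum>b\<in>D. \<Sum>y\<in>B. f x y a b)"
    by (rule sum.cong[OF refl], rule sum.cong[OF refl], rule sum.swap)
  also have "\<dots> = (\<Sum>a\<in>C. \<Sum>b\<in>D. \<Sum>x\<in>A. \<Sum>y\<in>B. f x y a b)"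
    by (rule sum.cong[OF refl], rule sum.swap)
  finally show ?thesis .
qed

section \<open>Matrices on the one-particle space\<close>

definition qform :: "nat \<Rightarrow> (nat \<Rightarrow> nat \<Rightarrow> complex) \<Rightarrow> (nat \<Rightarrow> complex) \<Rightarrow> complex" where
  "qform d M v = (\<Sum>i<d. \<Sum>j<d. cnj (v i) * M i j * v j)"

definition psd_mat :: "nat \<Rightarrow> (nat \<Rightarrow> nat \<Rightarrow> complex) \<Rightarrow> bool" where
  "psd_mat d M \<longleftrightarrow> (\<forall>v. qform d M v \<in> \<real> \<and> Re (qform d M v) \<ge> 0)"

definition id_mat :: "nat \<Rightarrow> nat \<Rightarrow> complex" where
  "id_mat x y = (if x = y then 1 else 0)"

definition gram_factor :: "nat \<Rightarrow> (nat \<Rightarrow> nat \<Rightarrow> complex) \<Rightarrow> (nat \<Rightarrow> nat \<Rightarrow> complex) \<Rightarrow> bool" where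
  "gram_factor d B C \<longleftrightarrow> (\<forall>x<d. \<forall>y<d. C x y = (\<Sum>k<d. cnj (B k x) * B k y))"

lemma if_zero_simps:
  "x * (if P then a else 0) = (if P then x * a else 0)"
  "(if P then a else 0) * x = (if P then a * x else 0)"
  "cnj (if P then a else 0) = (if P then cnj a else 0)"
  for x a :: complex
  by auto

lemma sum_if_const: "(\<Sum>j\<in>A. if P then f j else 0) = (if P then (\<Sum>j\<in>A. f j) else 0)"
  by auto

lemma qform_two_point:
  assumes "i < d" "j < d" "i \<noteq> j"
  shows "qform d M (\<lambda>k. if k = i then a else if k = j then b else 0)
       = cnj a * M i i * a + cnj a * M i j * b + cnj b * M j i * a + cnj b * M j j * b"
proof -
  have e: "(\<lambda>k. if k = i then a else if k = j then b else 0) = (\<lambda>k. (if k = i then a else 0) + (if k = j then b else 0))"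
    using assms by auto
  show ?thesis unfolding qform_def e
    using assms by (simp add: distrib_left distrib_right sum.distrib if_zero_simps sum.delta sum_if_const)
qed

lemma qform_one_point:
  assumes "i < d"
  shows "qform d M (\<lambda>k. if k = i then a else 0) = cnj a * M i i * a"
  unfolding qform_def using assms by (simp add: if_zero_simps sum.delta)

lemma psd_mat_diag:
  assumes "psd_mat d M" "i < d"
  shows "M i i \<in> \<real>" "Re (M i i) \<ge> 0"
proof -
  have "qform d M (\<lambda>k. if k = i then 1 else 0) = M i i" using qform_one_point[OF assms(2)] by simp
  then show "M i i \<in> \<real>" "Re (M i i) \<ge> 0" using assms(1) unfolding psd_mat_def by metis+
qed

lemma psd_mat_hermitian:
  assumes "psd_mat d M" "i < d" "j < d"
  shows "M i j = cnj (M j i)"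
proof (cases "i = j")
  case True
  then show ?thesis using psd_mat_diag[OF assms(1,2)] by (simp add: Reals_cnj_iff)
next
  case False
  have ri: "Im (M i i) = 0" and rj: "Im (M j j) = 0"
    using psd_mat_diag[OF assms(1,2)] psd_mat_diag[OF assms(1,3)] by (auto simp: complex_is_Real_iff)
  have "qform d M (\<lambda>k. if k = i then 1 else if k = j then 1 else 0) \<in> \<real>"
    using assms(1) unfolding psd_mat_def by blast
  then have 1: "Im (M i i + M i j + M j i + M j j) = 0"
    using qform_two_point[OF assms(2,3) False, of M 1 1] by (simp add: complex_is_Real_iff)
  have "qform d M (\<lambda>k. if k = i then 1 else if k = j then \<i> else 0) \<in> \<real>"
    using assms(1) unfolding psd_mat_def by blast
  then have 2: "Im (M i i + \<i> * M i j - \<i> * M j i + M j j) = 0"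
    using qform_two_point[OF assms(2,3) False, of M 1 \<i>] by (simp add: complex_is_Real_iff algebra_simps)
  show ?thesis using 1 2 ri rj by (simp add: complex_eq_iff)
qed

lemma qform_Suc:
  "qform (Suc d) M v = qform d M v + (\<Sum>i<d. cnj (v i) * M i d) * v d + cnj (v d) * (\<Sum>j<d. M d j * v j)
     + cnj (v d) * M d d * v d"
  unfolding qform_def by (simp add: sum.distrib sum_distrib_left sum_distrib_right algebra_simps)

lemma qform_cong: "(\<And>k. k < d \<Longrightarrow> v k = w k) \<Longrightarrow> qform d M v = qform d M w"
  unfolding qform_def by (intro sum.cong refl) auto

lemma qform_cong_mat: "(\<And>x y. x < d \<Longrightarrow> y < d \<Longrightarrow> C x y = C' x y) \<Longrightarrow> qform d C v = qform d C' v"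
  unfolding qform_def by (intro sum.cong refl) auto

lemma qform_sum: "qform d (\<lambda>x y. \<Sum>w\<in>W. f w * C w x y) v = (\<Sum>w\<in>W. f w * qform d (C w) v)"
  unfolding qform_def sum_distrib_left sum_distrib_right
  by (subst sum.swap, rule sum.cong[OF refl], subst sum.swap) (simp add: mult_ac)

lemma qform_id_mat: "qform d id_mat v = (\<Sum>x<d. cnj (v x) * v x)"
  unfolding qform_def id_mat_def by (simp add: if_zero_simps sum.delta cong: if_cong)

lemma psd_mat_qform_real: "psd_mat d C \<Longrightarrow> qform d C v = of_real (Re (qform d C v))"
  unfolding psd_mat_def by (metis Reals_cases Re_complex_of_real)

lemma psd_mat_zero_diag_row:
  assumes psd_mat: "psd_mat (Suc d) M" and a0: "M d d = 0" and j: "j < d"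
  shows "M d j = 0"
proof (rule ccontr)
  assume m0: "M d j \<noteq> 0"
  define m where "m = M d j"
  have herm: "M j d = cnj m" using psd_mat_hermitian[OF psd_mat, of j d] j by (simp add: m_def)
  have rj: "M j j = of_real (Re (M j j))" "Re (M j j) \<ge> 0"
    using psd_mat_diag[OF psd_mat, of j] j by (auto simp: complex_is_Real_iff complex_eq_iff)
  define mjj where "mjj = Re (M j j)"
  define t :: real where "t = 1 / (mjj + 1)"
  have t0: "t > 0" using rj by (simp add: t_def mjj_def)
  have tm: "t * mjj < 1" using rj by (simp add: t_def mjj_def field_simps)
  \<comment> \<open>on the test vector \<alpha> e_j + e_d the form equals t |m|^2 (t M_jj - 2) < 0\<close>
  define \<alpha> where "\<alpha> = - of_real t * cnj m"
  have "qform (Suc d) M (\<lambda>k. if k = j then \<alpha> else if k = d then 1 else 0)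
        = cnj \<alpha> * M j j * \<alpha> + cnj \<alpha> * M j d * 1 + cnj 1 * M d j * \<alpha> + cnj 1 * M d d * 1"
    using j by (intro qform_two_point) auto
  also have "\<dots> = of_real (t * t * mjj * (cmod m)\<^sup>2 - 2 * t * (cmod m)\<^sup>2)"
    using rj a0 herm unfolding \<alpha>_def mjj_def m_def
    by (simp add: algebra_simps power2_eq_square complex_norm_square[symmetric]
          flip: complex_norm_square)
  finally have "Re (qform (Suc d) M (\<lambda>k. if k = j then \<alpha> else if k = d then 1 else 0))
      = t * t * mjj * (cmod m)\<^sup>2 - 2 * t * (cmod m)\<^sup>2" by simp
  also have "\<dots> = t * (cmod m)\<^sup>2 * (t * mjj - 2)" by (simp add: algebra_simps)
  finally have "Re (qform (Suc d) M (\<lambda>k. if k = j then \<alpha> else if k = d then 1 else 0))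
      = t * (cmod m)\<^sup>2 * (t * mjj - 2)" .
  moreover have "Re (qform (Suc d) M (\<lambda>k. if k = j then \<alpha> else if k = d then 1 else 0)) \<ge> 0"
    using psd_mat unfolding psd_mat_def by blast
  moreover have "t * (cmod m)\<^sup>2 > 0" using t0 m0 by (simp add: m_def)
  ultimately have "t * mjj - 2 \<ge> 0"
    by (metis zero_le_mult_iff linorder_not_le)
  then show False using tm by simp
qed

lemma psd_mat_Suc_restrict:
  assumes "psd_mat (Suc d) M"
  shows "psd_mat d M"
  unfolding psd_mat_def
proof
  fix v
  have "qform (Suc d) M (\<lambda>k. if k < d then v k else 0) = qform d M v"
    by (subst qform_Suc) (auto intro: qform_cong)
  then show "qform d M v \<in> \<real> \<and> 0 \<le> Re (qform d M v)"
    using assms unfolding psd_mat_def by metis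
qed

lemma psd_mat_schur_complement:
  assumes psd: "psd_mat (Suc d) M" and pos: "Re (M d d) > 0"
  shows "psd_mat d (\<lambda>i j. M i j - cnj (M d i) * M d j / M d d)"
  unfolding psd_mat_def
proof
  fix v
  define ar where "ar = Re (M d d)"
  have ar: "M d d = of_real ar"
    using psd_mat_diag[OF psd, of d] by (auto simp: ar_def complex_is_Real_iff complex_eq_iff)
  define s where "s = (\<Sum>j<d. M d j * v j)"
  \<comment> \<open>completing the square: extend v by the coordinate that minimises the form\<close>
  define v' where "v' k = (if k < d then v k else - s / of_real ar)" for k
  have v'd: "v' d = - s / of_real ar" by (simp add: v'_def)
  have q1: "qform d M v' = qform d M v" by (rule qform_cong) (simp add: v'_def)
  have Mid: "M i d = cnj (M d i)" if "i < d" for i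
    using psd_mat_hermitian[OF psd, of i d] that by simp
  have s1: "(\<Sum>i<d. cnj (v' i) * M i d) = cnj s"
    unfolding s_def cnj_sum by (intro sum.cong refl) (simp add: v'_def Mid mult.commute)
  have s2: "(\<Sum>j<d. M d j * v' j) = s"
    unfolding s_def by (intro sum.cong refl) (simp add: v'_def)
  have "qform (Suc d) M v' = qform d M v - cnj s * s / of_real ar"
    unfolding qform_Suc q1 s1 s2 v'd ar using pos by (simp add: field_simps ar_def power2_eq_square)
  also have "\<dots> = qform d (\<lambda>i j. M i j - cnj (M d i) * M d j / M d d) v"
    unfolding qform_def ar s_def cnj_sum complex_cnj_mult sum_product
    by (simp add: sum_subtractf sum_divide_distrib algebra_simps)
  finally show "qform d (\<lambda>i j. M i j - cnj (M d i) * M d j / M d d) v \<in> \<real> \<and>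
      0 \<le> Re (qform d (\<lambda>i j. M i j - cnj (M d i) * M d j / M d d) v)"
    using psd unfolding psd_mat_def by metis
qed

lemma gram_factor_Suc_zero_diag:
  assumes psd: "psd_mat (Suc d) M" and a0: "M d d = 0" and B: "gram_factor d B M"
  shows "gram_factor (Suc d) (\<lambda>k j. if k < d \<and> j < d then B k j else 0) M"
  unfolding gram_factor_def
proof (intro allI impI)
  fix i j assume ij: "i < Suc d" "j < Suc d"
  have row0: "M d j = 0" if "j < Suc d" for j
    using psd_mat_zero_diag_row[OF psd a0] a0 that by (cases "j = d") auto
  have col0: "M j d = 0" if "j < Suc d" for j
    using psd_mat_hermitian[OF psd that, of d] row0[OF that] by simp
  show "M i j = (\<Sum>k<Suc d. cnj (if k < d \<and> i < d then B k i else 0) * (if k < d \<and> j < d then B k j else 0))"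
  proof (cases "i < d \<and> j < d")
    case True
    then show ?thesis using B by (simp add: gram_factor_def)
  next
    case False
    then have "i = d \<or> j = d" using ij by auto
    then show ?thesis using row0 col0 ij by auto
  qed
qed

lemma gram_factor_Suc_pos_diag:
  assumes psd: "psd_mat (Suc d) M" and pos: "Re (M d d) > 0"
    and B: "gram_factor d B (\<lambda>i j. M i j - cnj (M d i) * M d j / M d d)"
  defines "B' \<equiv> \<lambda>k j. if k < d then (if j < d then B k j else 0) else M d j / of_real (sqrt (Re (M d d)))"
  shows "gram_factor (Suc d) B' M"
  unfolding gram_factor_def
proof (intro allI impI)
  fix i j assume i: "i < Suc d" and j: "j < Suc d"
  have Im0: "Im (M d d) = 0"
    using psd_mat_diag[OF psd, of d] by (simp add: complex_is_Real_iff)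
  have last: "cnj (B' d i) * B' d j = cnj (M d i) * M d j / M d d"
  proof -
    have "of_real (sqrt (Re (M d d)) * sqrt (Re (M d d))) = M d d"
      using pos Im0 by (simp add: complex_eq_iff)
    then have sq: "of_real (sqrt (Re (M d d))) * of_real (sqrt (Re (M d d))) = M d d"
      by (simp only: of_real_mult)
    have "cnj (B' d i) * B' d j
        = cnj (M d i) * M d j / (of_real (sqrt (Re (M d d))) * of_real (sqrt (Re (M d d))))"
      by (simp add: B'_def)
    then show ?thesis by (simp only: sq)
  qed
  then have sum_eq: "(\<Sum>k<Suc d. cnj (B' k i) * B' k j)
      = (\<Sum>k<d. cnj (B' k i) * B' k j) + cnj (M d i) * M d j / M d d"
    by simp
  show "M i j = (\<Sum>k<Suc d. cnj (B' k i) * B' k j)"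
  proof (cases "i < d \<and> j < d")
    case True
    then have "(\<Sum>k<d. cnj (B' k i) * B' k j) = M i j - cnj (M d i) * M d j / M d d"
      using B by (simp add: B'_def gram_factor_def)
    then show ?thesis using sum_eq by simp
  next
    case False
    then have z: "(\<Sum>k<d. cnj (B' k i) * B' k j) = 0" by (auto simp: B'_def)
    have Mdd: "M d d \<noteq> 0" "cnj (M d d) = M d d" using pos Im0 by (auto simp: complex_eq_iff)
    consider "i = d" | "j = d" "i < d" using False i j by linarith
    then show ?thesis
    proof cases
      case 1
      then show ?thesis using z sum_eq Mdd by simp
    next
      case 2
      then show ?thesis using z sum_eq Mdd(1) psd_mat_hermitian[OF psd i, of d] by simp
    qed
  qed
qed

lemma psd_mat_gram_factor:
  "psd_mat d M \<Longrightarrow> \<exists>B. gram_factor d B M"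
proof (induction d arbitrary: M)
  case 0
  then show ?case by (simp add: gram_factor_def)
next
  case (Suc d)
  note psd = Suc.prems
  have "Im (M d d) = 0" "Re (M d d) \<ge> 0"
    using psd_mat_diag[OF psd, of d] by (auto simp: complex_is_Real_iff)
  then consider "M d d = 0" | "Re (M d d) > 0"
    by (cases "Re (M d d) = 0") (auto simp: complex_eq_iff)
  then show ?case
  proof cases
    case 1
    obtain B where "gram_factor d B M"
      using Suc.IH psd_mat_Suc_restrict[OF psd] by blast
    then show ?thesis using gram_factor_Suc_zero_diag[OF psd 1] by blast
  next
    case 2
    \<comment> \<open>one step of the Cholesky factorization, via the Schur complement of the last diagonal entry\<close>
    obtain B where "gram_factor d B (\<lambda>i j. M i j - cnj (M d i) * M d j / M d d)"
      using Suc.IH psd_mat_schur_complement[OF psd 2] by blast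
    then show ?thesis using gram_factor_Suc_pos_diag[OF psd 2] by blast
  qed
qed

definition sandwich :: "nat \<Rightarrow> (nat \<Rightarrow> nat \<Rightarrow> complex) \<Rightarrow> (nat \<Rightarrow> nat \<Rightarrow> complex) \<Rightarrow> nat \<Rightarrow> nat \<Rightarrow> complex" where
  "sandwich d K C a b = (\<Sum>x<d. \<Sum>y<d. cnj (K x a) * C x y * K y b)"

lemma sandwich_cong:
  assumes "\<And>x y. x < d \<Longrightarrow> y < d \<Longrightarrow> C x y = C' x y"
  shows "sandwich d K C a b = sandwich d K C' a b"
  unfolding sandwich_def using assms by (intro sum.cong refl) auto

lemma sandwich_id_mat: "b < d \<Longrightarrow> sandwich d K id_mat a b = (\<Sum>x<d. cnj (K x a) * K x b)"
  unfolding sandwich_def id_mat_def by (simp add: if_zero_simps sum.delta cong: if_cong)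

lemma sandwich_sum: "sandwich d K (\<lambda>x y. \<Sum>w\<in>W. f w * C w x y) a b = (\<Sum>w\<in>W. f w * sandwich d K (C w) a b)"
  unfolding sandwich_def sum_distrib_left sum_distrib_right
  by (subst sum.swap, rule sum.cong[OF refl], subst sum.swap) (simp add: mult_ac)

lemma sandwich_gram:
  assumes "gram_factor d B C"
  shows "gram_factor d (\<lambda>k a. \<Sum>x<d. B k x * K x a) (sandwich d K C)"
  unfolding gram_factor_def
proof (intro allI impI)
  fix a b
  have "sandwich d K C a b = (\<Sum>x<d. \<Sum>y<d. \<Sum>k<d. cnj (K x a) * (cnj (B k x) * B k y) * K y b)"
    unfolding sandwich_def using assms by (simp add: gram_factor_def sum_distrib_left sum_distrib_right)
  also have "\<dots> = (\<Sum>k<d. \<Sum>x<d. \<Sum>y<d. cnj (K x a) * (cnj (B k x) * B k y) * K y b)"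
    by (subst sum.swap, rule sum.cong[OF refl], rule sum.swap)
  also have "\<dots> = (\<Sum>k<d. cnj (\<Sum>x<d. B k x * K x a) * (\<Sum>y<d. B k y * K y b))"
    unfolding cnj_sum complex_cnj_mult sum_product by (simp add: mult_ac)
  finally show "sandwich d K C a b = (\<Sum>k<d. cnj (\<Sum>x<d. B k x * K x a) * (\<Sum>y<d. B k y * K y b))" .
qed

section \<open>Product operators on the tensor power\<close>

definition tensor_op :: "nat \<Rightarrow> nat \<Rightarrow> (nat \<Rightarrow> nat \<Rightarrow> nat \<Rightarrow> complex) \<Rightarrow> (nat list \<Rightarrow> complex) \<Rightarrow> nat list \<Rightarrow> complex" where
  "tensor_op d n E v = (\<lambda>xs. \<Sum>ys\<in>idx d n. (\<Prod>i<n. E i (xs!i) (ys!i)) * v ys)"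

definition tensor_form :: "nat \<Rightarrow> nat \<Rightarrow> (nat \<Rightarrow> nat \<Rightarrow> nat \<Rightarrow> complex) \<Rightarrow> (nat list \<Rightarrow> complex) \<Rightarrow> complex" where
  "tensor_form d n C v = (\<Sum>xs\<in>idx d n. \<Sum>ys\<in>idx d n. cnj (v xs) * (\<Prod>i<n. C i (xs!i) (ys!i)) * v ys)"

definition tensor_norm_sq :: "nat \<Rightarrow> nat \<Rightarrow> (nat list \<Rightarrow> complex) \<Rightarrow> real" where
  "tensor_norm_sq d n v = (\<Sum>xs\<in>idx d n. (cmod (v xs))\<^sup>2)"

lemma tensor_norm_sq_nonneg: "tensor_norm_sq d n v \<ge> 0"
  unfolding tensor_norm_sq_def by (simp add: sum_nonneg)

lemma born_prob_eq_tensor_form: "born_prob d n M ws \<phi> = Re (tensor_form d n (\<lambda>i. M (ws!i)) \<phi>)"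
  by (simp add: born_prob_def tensor_form_def)

lemma tensor_form_cong:
  assumes "\<And>i x y. i < n \<Longrightarrow> x < d \<Longrightarrow> y < d \<Longrightarrow> C i x y = C' i x y"
  shows "tensor_form d n C v = tensor_form d n C' v"
  unfolding tensor_form_def
  by (intro sum.cong refl arg_cong2[where f="(*)"] prod.cong) (auto simp: idx_nth_less assms)

lemma tensor_form_scale:
  "tensor_form d n (\<lambda>i x y. c i * C i x y) v = (\<Prod>i<n. c i) * tensor_form d n C v"
  unfolding tensor_form_def sum_distrib_left by (intro sum.cong refl) (simp add: prod.distrib mult_ac)

lemma tensor_form_gram:
  assumes "\<And>i. i < n \<Longrightarrow> gram_factor d (E i) (C i)"
  shows "tensor_form d n C v = of_real (\<Sum>ks\<in>idx d n. (cmod (tensor_op d n E v ks))\<^sup>2)"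
proof -
  have "tensor_form d n C v = (\<Sum>xs\<in>idx d n. \<Sum>ys\<in>idx d n. cnj (v xs) *
          (\<Sum>ks\<in>idx d n. \<Prod>i<n. cnj (E i (ks!i) (xs!i)) * E i (ks!i) (ys!i)) * v ys)"
  proof -
    have "(\<Prod>i<n. C i (xs!i) (ys!i)) = (\<Sum>ks\<in>idx d n. \<Prod>i<n. cnj (E i (ks!i) (xs!i)) * E i (ks!i) (ys!i))"
      if "xs \<in> idx d n" "ys \<in> idx d n" for xs ys
    proof -
      have "(\<Prod>i<n. C i (xs!i) (ys!i)) = (\<Prod>i<n. \<Sum>k<d. cnj (E i k (xs!i)) * E i k (ys!i))"
        using that assms by (intro prod.cong refl) (auto simp: idx_nth_less gram_factor_def)
      also have "\<dots> = (\<Sum>ks\<in>idx d n. \<Prod>i<n. cnj (E i (ks!i) (xs!i)) * E i (ks!i) (ys!i))"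
        unfolding idx_eq_lists_of by (rule sum_lists_of_prod[symmetric]) simp
      finally show ?thesis .
    qed
    then show ?thesis unfolding tensor_form_def by (intro sum.cong refl) auto
  qed
  also have "\<dots> = (\<Sum>xs\<in>idx d n. \<Sum>ks\<in>idx d n. \<Sum>ys\<in>idx d n. cnj (v xs) *
          (\<Prod>i<n. cnj (E i (ks!i) (xs!i)) * E i (ks!i) (ys!i)) * v ys)"
    by (rule sum.cong[OF refl]) (simp only: sum_distrib_left sum_distrib_right, rule sum.swap)
  also have "\<dots> = (\<Sum>ks\<in>idx d n. \<Sum>xs\<in>idx d n. \<Sum>ys\<in>idx d n. cnj (v xs) *
          (\<Prod>i<n. cnj (E i (ks!i) (xs!i)) * E i (ks!i) (ys!i)) * v ys)"
    by (rule sum.swap)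
  also have "\<dots> = (\<Sum>ks\<in>idx d n. cnj (tensor_op d n E v ks) * tensor_op d n E v ks)"
    unfolding tensor_op_def cnj_sum complex_cnj_mult cnj_prod sum_product
    by (intro sum.cong refl) (simp add: prod.distrib mult_ac)
  also have "\<dots> = of_real (\<Sum>ks\<in>idx d n. (cmod (tensor_op d n E v ks))\<^sup>2)"
    by (simp add: complex_norm_square[symmetric] mult.commute)
  finally show ?thesis .
qed

lemma sum_lists_of_tensor_form:
  assumes "finite W"
  shows "(\<Sum>ws\<in>lists_of W n. (\<Prod>i<n. z i (ws!i)) * tensor_form d n (\<lambda>i. C i (ws!i)) v)
       = tensor_form d n (\<lambda>i x y. \<Sum>w\<in>W. z i w * C i w x y) v"
proof -
  have "(\<Sum>ws\<in>lists_of W n. (\<Prod>i<n. z i (ws!i)) * tensor_form d n (\<lambda>i. C i (ws!i)) v)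
      = (\<Sum>ws\<in>lists_of W n. \<Sum>xs\<in>idx d n. \<Sum>ys\<in>idx d n.
           cnj (v xs) * (\<Prod>i<n. z i (ws!i) * C i (ws!i) (xs!i) (ys!i)) * v ys)"
    unfolding tensor_form_def sum_distrib_left
    by (intro sum.cong refl) (simp add: prod.distrib mult_ac)
  also have "\<dots> = (\<Sum>xs\<in>idx d n. \<Sum>ys\<in>idx d n. \<Sum>ws\<in>lists_of W n.
           cnj (v xs) * (\<Prod>i<n. z i (ws!i) * C i (ws!i) (xs!i) (ys!i)) * v ys)"
    by (subst sum.swap, rule sum.cong[OF refl], rule sum.swap)
  also have "\<dots> = (\<Sum>xs\<in>idx d n. \<Sum>ys\<in>idx d n.
           cnj (v xs) * (\<Sum>ws\<in>lists_of W n. \<Prod>i<n. z i (ws!i) * C i (ws!i) (xs!i) (ys!i)) * v ys)"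
    by (simp add: sum_distrib_left sum_distrib_right)
  also have "\<dots> = tensor_form d n (\<lambda>i x y. \<Sum>w\<in>W. z i w * C i w x y) v"
  proof -
    have "(\<Sum>ws\<in>lists_of W n. \<Prod>i<n. z i (ws!i) * C i (ws!i) (xs!i) (ys!i))
        = (\<Prod>i<n. \<Sum>w\<in>W. z i w * C i w (xs!i) (ys!i))" for xs ys
      by (rule sum_lists_of_prod[OF assms])
    then show ?thesis unfolding tensor_form_def by simp
  qed
  finally show ?thesis .
qed

lemma tensor_form_tensor_op: "tensor_form d n C (tensor_op d n Kf v) = tensor_form d n (\<lambda>i. sandwich d (Kf i) (C i)) v"
proof -
  have "tensor_form d n C (tensor_op d n Kf v) = (\<Sum>xs\<in>idx d n. \<Sum>ys\<in>idx d n. \<Sum>as\<in>idx d n. \<Sum>bs\<in>idx d n.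
      cnj (v as) * (\<Prod>i<n. cnj (Kf i (xs!i) (as!i)) * C i (xs!i) (ys!i) * Kf i (ys!i) (bs!i)) * v bs)"
    unfolding tensor_form_def tensor_op_def cnj_sum complex_cnj_mult cnj_prod sum_distrib_right
    unfolding sum_distrib_left
    by (intro sum.cong refl) (simp add: prod.distrib mult_ac)
  also have "\<dots> = (\<Sum>as\<in>idx d n. \<Sum>bs\<in>idx d n. \<Sum>xs\<in>idx d n. \<Sum>ys\<in>idx d n.
      cnj (v as) * (\<Prod>i<n. cnj (Kf i (xs!i) (as!i)) * C i (xs!i) (ys!i) * Kf i (ys!i) (bs!i)) * v bs)"
    by (rule sum4_swap)
  also have "\<dots> = (\<Sum>as\<in>idx d n. \<Sum>bs\<in>idx d n.
      cnj (v as) * (\<Sum>xs\<in>idx d n. \<Sum>ys\<in>idx d n. \<Prod>i<n. cnj (Kf i (xs!i) (as!i)) * C i (xs!i) (ys!i) * Kf i (ys!i) (bs!i)) * v bs)"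
    by (simp add: sum_distrib_left sum_distrib_right)
  also have "\<dots> = tensor_form d n (\<lambda>i. sandwich d (Kf i) (C i)) v"
  proof -
    have "(\<Sum>xs\<in>idx d n. \<Sum>ys\<in>idx d n. \<Prod>i<n. cnj (Kf i (xs!i) (as!i)) * C i (xs!i) (ys!i) * Kf i (ys!i) (bs!i))
       = (\<Prod>i<n. \<Sum>x<d. \<Sum>y<d. cnj (Kf i x (as!i)) * C i x y * Kf i y (bs!i))" for as bs
      by (rule sum2_idx_prod)
    then show ?thesis unfolding tensor_form_def sandwich_def by simp
  qed
  finally show ?thesis .
qed

lemma prod_id_mat:
  assumes "xs \<in> idx d n" "ys \<in> idx d n"
  shows "(\<Prod>i<n. id_mat (xs!i) (ys!i)) = (if xs = ys then 1 else 0)"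
proof (cases "xs = ys")
  case True
  then show ?thesis by (simp add: id_mat_def)
next
  case False
  have "length xs = n" "length ys = n" using assms by (auto simp: idx_def)
  then obtain i where "i < n" "xs ! i \<noteq> ys ! i" using False nth_equalityI by metis
  then show ?thesis using False by (auto simp: id_mat_def intro!: prod_zero)
qed

lemma tensor_form_id_mat: "tensor_form d n (\<lambda>i. id_mat) v = of_real (tensor_norm_sq d n v)"
proof -
  have "tensor_form d n (\<lambda>i. id_mat) v = (\<Sum>xs\<in>idx d n. \<Sum>ys\<in>idx d n. if xs = ys then cnj (v xs) * v ys else 0)"
    unfolding tensor_form_def by (intro sum.cong refl) (simp add: prod_id_mat)
  also have "\<dots> = (\<Sum>xs\<in>idx d n. cnj (v xs) * v xs)"
    by (simp add: sum.delta finite_idx)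
  also have "\<dots> = of_real (tensor_norm_sq d n v)"
    unfolding tensor_norm_sq_def by (simp add: complex_norm_square[symmetric] mult.commute)
  finally show ?thesis .
qed

lemma tensor_op_sum:
  assumes "\<And>ys. ys \<in> idx d n \<Longrightarrow> v ys = (\<Sum>S\<in>F. a S ys)"
  shows "tensor_op d n E v ks = (\<Sum>S\<in>F. tensor_op d n E (a S) ks)"
  unfolding tensor_op_def using assms
  by (simp add: sum_distrib_left sum.swap[of _ F] cong: sum.cong)

lemma norm_sum_squared_le:
  assumes "finite F"
  shows "(cmod (\<Sum>S\<in>F. z S))\<^sup>2 \<le> real (card F) * (\<Sum>S\<in>F. (cmod (z S))\<^sup>2)"
proof -
  have "(cmod (\<Sum>S\<in>F. z S))\<^sup>2 \<le> (\<Sum>S\<in>F. cmod (z S))\<^sup>2"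
    by (intro power_mono norm_sum) simp
  also have "\<dots> \<le> (\<Sum>S\<in>F. (cmod (z S))\<^sup>2) * card F"
    by (rule sum_squared_le_sum_of_squares)
  finally show ?thesis by (simp add: mult.commute)
qed

lemma born_prob_gram:
  assumes B: "\<And>w. w \<in> W \<Longrightarrow> gram_factor d (B w) (M w)"
    and ws: "ws \<in> lists_of W n"
  shows "born_prob d n M ws v = (\<Sum>ks\<in>idx d n. (cmod (tensor_op d n (\<lambda>i. B (ws!i)) v ks))\<^sup>2)"
proof -
  have "tensor_form d n (\<lambda>i. M (ws!i)) v = of_real (\<Sum>ks\<in>idx d n. (cmod (tensor_op d n (\<lambda>i. B (ws!i)) v ks))\<^sup>2)"
    by (rule tensor_form_gram) (use ws in \<open>auto simp: lists_of_def intro!: B\<close>)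
  then show ?thesis by (simp add: born_prob_eq_tensor_form)
qed

lemma is_POVM_finite: "is_POVM d W M \<Longrightarrow> finite W"
  by (simp add: is_POVM_def)

lemma is_POVM_psd_mat: "is_POVM d W M \<Longrightarrow> w \<in> W \<Longrightarrow> psd_mat d (M w)"
  unfolding is_POVM_def psd_mat_def qform_def by blast

lemma is_POVM_sum_id: "is_POVM d W M \<Longrightarrow> i < d \<Longrightarrow> j < d \<Longrightarrow> (\<Sum>w\<in>W. M w i j) = id_mat i j"
  unfolding is_POVM_def id_mat_def by blast

lemma is_POVM_gram_factors:
  assumes "is_POVM d W M"
  obtains B where "\<And>w. w \<in> W \<Longrightarrow> gram_factor d (B w) (M w)"
proof -
  have "\<forall>w\<in>W. \<exists>B. gram_factor d B (M w)"
    using psd_mat_gram_factor is_POVM_psd_mat[OF assms] by blast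
  then show thesis using that by metis
qed

lemma born_prob_nonneg:
  assumes "is_POVM d W M" and "ws \<in> lists_of W n"
  shows "born_prob d n M ws v \<ge> 0"
proof -
  obtain B where B: "\<And>w. w \<in> W \<Longrightarrow> gram_factor d (B w) (M w)"
    using is_POVM_gram_factors[OF assms(1)] by blast
  have "born_prob d n M ws v = (\<Sum>ks\<in>idx d n. (cmod (tensor_op d n (\<lambda>i. B (ws!i)) v ks))\<^sup>2)"
    by (rule born_prob_gram[OF B assms(2)])
  then show ?thesis by (simp add: sum_nonneg)
qed

lemma born_prob_sum_le:
  assumes M: "is_POVM d W M"
    and ws: "ws \<in> lists_of W n" and F: "finite F"
    and dec: "\<And>ys. ys \<in> idx d n \<Longrightarrow> v ys = (\<Sum>S\<in>F. a S ys)"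
  shows "born_prob d n M ws v \<le> real (card F) * (\<Sum>S\<in>F. born_prob d n M ws (a S))"
proof -
  obtain B where B: "\<And>w. w \<in> W \<Longrightarrow> gram_factor d (B w) (M w)"
    using is_POVM_gram_factors[OF M] by blast
  have "born_prob d n M ws v = (\<Sum>ks\<in>idx d n. (cmod (\<Sum>S\<in>F. tensor_op d n (\<lambda>i. B (ws!i)) (a S) ks))\<^sup>2)"
  proof -
    have "tensor_op d n (\<lambda>i. B (ws!i)) v ks = (\<Sum>S\<in>F. tensor_op d n (\<lambda>i. B (ws!i)) (a S) ks)" for ks
      by (rule tensor_op_sum) (rule dec)
    then show ?thesis using born_prob_gram[OF B ws, where v=v] by simp
  qed
  also have "\<dots> \<le> (\<Sum>ks\<in>idx d n. real (card F) * (\<Sum>S\<in>F. (cmod (tensor_op d n (\<lambda>i. B (ws!i)) (a S) ks))\<^sup>2))"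
    by (intro sum_mono norm_sum_squared_le F)
  also have "\<dots> = real (card F) * (\<Sum>S\<in>F. born_prob d n M ws (a S))"
  proof -
    have e: "born_prob d n M ws (a S) = (\<Sum>ks\<in>idx d n. (cmod (tensor_op d n (\<lambda>i. B (ws!i)) (a S) ks))\<^sup>2)" for S
      by (rule born_prob_gram[OF B ws])
    show ?thesis unfolding e sum_distrib_left by (rule sum.swap)
  qed
  finally show ?thesis .
qed

lemma sum_born_prob:
  assumes M: "is_POVM d W M"
  shows "(\<Sum>ws\<in>lists_of W n. born_prob d n M ws v) = tensor_norm_sq d n v"
proof -
  have "(\<Sum>ws\<in>lists_of W n. (\<Prod>i<n. (\<lambda>i w. 1::complex) i (ws!i)) * tensor_form d n (\<lambda>i. (\<lambda>i. M) i (ws!i)) v)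
      = tensor_form d n (\<lambda>i x y. \<Sum>w\<in>W. 1 * M w x y) v"
    by (rule sum_lists_of_tensor_form[OF is_POVM_finite[OF M]])
  also have "\<dots> = tensor_form d n (\<lambda>i. id_mat) v"
    by (rule tensor_form_cong) (simp add: is_POVM_sum_id[OF M])
  also have "\<dots> = of_real (tensor_norm_sq d n v)" by (rule tensor_form_id_mat)
  finally have "(\<Sum>ws\<in>lists_of W n. tensor_form d n (\<lambda>i. M (ws!i)) v) = of_real (tensor_norm_sq d n v)" by simp
  then show ?thesis unfolding born_prob_eq_tensor_form by (metis Re_complex_of_real Re_sum)
qed

lemma tensor_form_sandwich_real:
  assumes M: "is_POVM d W M" and ws: "ws \<in> lists_of W n"
  shows "tensor_form d n (\<lambda>i. sandwich d (K i) (M (ws!i))) v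
       = of_real (Re (tensor_form d n (\<lambda>i. sandwich d (K i) (M (ws!i))) v))"
proof -
  obtain B where B: "\<And>w. w \<in> W \<Longrightarrow> gram_factor d (B w) (M w)"
    using is_POVM_gram_factors[OF M] by blast
  have wsi: "ws ! i \<in> W" if "i < n" for i using ws that by (auto simp: lists_of_def)
  have "tensor_form d n (\<lambda>i. sandwich d (K i) (M (ws!i))) v
      = of_real (\<Sum>ks\<in>idx d n. (cmod (tensor_op d n (\<lambda>i k a. \<Sum>x<d. B (ws!i) k x * K i x a) v ks))\<^sup>2)"
    by (intro tensor_form_gram sandwich_gram B wsi)
  then show ?thesis by simp
qed

section \<open>Projections along \<theta>\<close>

definition proj_onto :: "(nat \<Rightarrow> complex) \<Rightarrow> nat \<Rightarrow> nat \<Rightarrow> complex" where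
  "proj_onto \<theta> x y = \<theta> x * cnj (\<theta> y)"

definition proj_perp :: "(nat \<Rightarrow> complex) \<Rightarrow> nat \<Rightarrow> nat \<Rightarrow> complex" where
  "proj_perp \<theta> x y = id_mat x y - proj_onto \<theta> x y"

definition proj_factor :: "(nat \<Rightarrow> complex) \<Rightarrow> nat set \<Rightarrow> nat \<Rightarrow> nat \<Rightarrow> nat \<Rightarrow> complex" where
  "proj_factor \<theta> S i = (if i \<in> S then proj_perp \<theta> else proj_onto \<theta>)"

lemma sandwich_id_mat_proj_factor:
  assumes h: "hinner d \<theta> \<theta> = 1" and "a < d" "b < d"
  shows "sandwich d (proj_factor \<theta> S i) id_mat a b = proj_factor \<theta> S i a b"
proof -
  have qt: "(\<Sum>x<d. cnj (proj_onto \<theta> x a) * proj_onto \<theta> x b) = proj_onto \<theta> a b"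
  proof -
    have "(\<Sum>x<d. cnj (proj_onto \<theta> x a) * proj_onto \<theta> x b) = (\<Sum>x<d. cnj (\<theta> x) * \<theta> x) * (\<theta> a * cnj (\<theta> b))"
      unfolding proj_onto_def sum_distrib_right by (intro sum.cong refl) (simp add: mult_ac)
    then show ?thesis using h by (simp add: proj_onto_def hinner_def)
  qed
  show ?thesis
  proof (cases "i \<in> S")
    case False
    then show ?thesis using qt assms by (simp add: proj_factor_def sandwich_id_mat)
  next
    case True
    have "(\<Sum>x<d. cnj (proj_perp \<theta> x a) * proj_perp \<theta> x b)
        = (\<Sum>x<d. cnj (id_mat x a) * id_mat x b) - (\<Sum>x<d. cnj (id_mat x a) * proj_onto \<theta> x b)
          - (\<Sum>x<d. cnj (proj_onto \<theta> x a) * id_mat x b) + (\<Sum>x<d. cnj (proj_onto \<theta> x a) * proj_onto \<theta> x b)"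
      unfolding proj_perp_def by (simp add: algebra_simps sum.distrib sum_subtractf)
    also have "\<dots> = id_mat a b - proj_onto \<theta> a b - proj_onto \<theta> a b + proj_onto \<theta> a b"
      using assms qt by (simp add: id_mat_def if_zero_simps sum.delta proj_onto_def mult.commute cong: if_cong)
    finally show ?thesis using True assms by (simp add: proj_factor_def sandwich_id_mat proj_perp_def)
  qed
qed

lemma sandwich_proj_onto: "sandwich d (proj_onto \<theta>) C a b = qform d C \<theta> * proj_onto \<theta> a b"
  unfolding sandwich_def qform_def proj_onto_def sum_distrib_right
  by (intro sum.cong refl) (simp add: mult_ac)

lemma sum_proj_factor_prod:
  assumes "xs \<in> idx d n" "ys \<in> idx d n"
  shows "(\<Sum>S\<in>Pow {..<n}. \<Prod>i<n. proj_factor \<theta> S i (xs!i) (ys!i)) = (if xs = ys then 1 else 0)"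
proof -
  have "(\<Sum>S\<in>Pow {..<n}. \<Prod>i<n. proj_factor \<theta> S i (xs!i) (ys!i))
      = (\<Sum>S\<in>Pow {..<n}. (\<Prod>i\<in>S. proj_perp \<theta> (xs!i) (ys!i)) * (\<Prod>i\<in>{..<n} - S. proj_onto \<theta> (xs!i) (ys!i)))"
  proof (intro sum.cong refl)
    fix S assume "S \<in> Pow {..<n}"
    then have S: "S \<subseteq> {..<n}" by auto
    have "(\<Prod>i<n. proj_factor \<theta> S i (xs!i) (ys!i)) = (\<Prod>i<n. if i \<in> S then proj_perp \<theta> (xs!i) (ys!i) else proj_onto \<theta> (xs!i) (ys!i))"
      by (intro prod.cong refl) (simp add: proj_factor_def)
    also have "\<dots> = (\<Prod>i\<in>{..<n} \<inter> {i. i \<in> S}. proj_perp \<theta> (xs!i) (ys!i)) * (\<Prod>i\<in>{..<n} \<inter> - {i. i \<in> S}. proj_onto \<theta> (xs!i) (ys!i))"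
      by (rule prod.If_cases) simp
    also have "{..<n} \<inter> {i. i \<in> S} = S" using S by auto
    also have "{..<n} \<inter> - {i. i \<in> S} = {..<n} - S" by auto
    finally show "(\<Prod>i<n. proj_factor \<theta> S i (xs!i) (ys!i)) = (\<Prod>i\<in>S. proj_perp \<theta> (xs!i) (ys!i)) * (\<Prod>i\<in>{..<n} - S. proj_onto \<theta> (xs!i) (ys!i))" .
  qed
  also have "\<dots> = (\<Prod>i<n. proj_perp \<theta> (xs!i) (ys!i) + proj_onto \<theta> (xs!i) (ys!i))"
    by (rule prod_add[symmetric]) simp
  also have "\<dots> = (\<Prod>i<n. id_mat (xs!i) (ys!i))" by (simp add: proj_perp_def)
  also have "\<dots> = (if xs = ys then 1 else 0)" by (rule prod_id_mat[OF assms])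
  finally show ?thesis .
qed

lemma sum_proj_tensor_op:
  assumes "xs \<in> idx d n"
  shows "(\<Sum>S\<in>Pow {..<n}. tensor_op d n (proj_factor \<theta> S) v xs) = v xs"
proof -
  have "(\<Sum>S\<in>Pow {..<n}. tensor_op d n (proj_factor \<theta> S) v xs)
      = (\<Sum>ys\<in>idx d n. (\<Sum>S\<in>Pow {..<n}. \<Prod>i<n. proj_factor \<theta> S i (xs!i) (ys!i)) * v ys)"
    unfolding tensor_op_def sum_distrib_right by (rule sum.swap)
  also have "\<dots> = (\<Sum>ys\<in>idx d n. (if xs = ys then v ys else 0))"
    using assms by (intro sum.cong refl) (simp add: sum_proj_factor_prod)
  also have "\<dots> = v xs" using assms by (simp add: sum.delta finite_idx)
  finally show ?thesis .
qed

lemma sum_proj_tensor_form: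
  "(\<Sum>S\<in>Pow {..<n}. tensor_form d n (proj_factor \<theta> S) v) = tensor_form d n (\<lambda>i. id_mat) v"
proof -
  have "(\<Sum>S\<in>Pow {..<n}. tensor_form d n (proj_factor \<theta> S) v)
      = (\<Sum>xs\<in>idx d n. \<Sum>ys\<in>idx d n. cnj (v xs) * (\<Sum>S\<in>Pow {..<n}. \<Prod>i<n. proj_factor \<theta> S i (xs!i) (ys!i)) * v ys)"
    unfolding tensor_form_def sum_distrib_left sum_distrib_right
    by (subst sum.swap, rule sum.cong[OF refl], rule sum.swap)
  also have "\<dots> = tensor_form d n (\<lambda>i. id_mat) v"
    unfolding tensor_form_def by (intro sum.cong refl) (simp add: sum_proj_factor_prod prod_id_mat)
  finally show ?thesis .
qed

lemma tensor_form_proj_factor: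
  assumes h: "hinner d \<theta> \<theta> = 1"
  shows "tensor_form d n (proj_factor \<theta> S) v = of_real (tensor_norm_sq d n (tensor_op d n (proj_factor \<theta> S) v))"
proof -
  have "of_real (tensor_norm_sq d n (tensor_op d n (proj_factor \<theta> S) v)) = tensor_form d n (\<lambda>i. id_mat) (tensor_op d n (proj_factor \<theta> S) v)"
    by (simp add: tensor_form_id_mat)
  also have "\<dots> = tensor_form d n (\<lambda>i. sandwich d (proj_factor \<theta> S i) id_mat) v" by (rule tensor_form_tensor_op)
  also have "\<dots> = tensor_form d n (proj_factor \<theta> S) v"
    by (rule tensor_form_cong) (simp add: sandwich_id_mat_proj_factor[OF h])
  finally show ?thesis by simp
qed

lemma sum_tensor_norm_sq_proj:
  assumes h: "hinner d \<theta> \<theta> = 1"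
  shows "(\<Sum>S\<in>Pow {..<n}. tensor_norm_sq d n (tensor_op d n (proj_factor \<theta> S) v)) = tensor_norm_sq d n v"
proof -
  have "complex_of_real (\<Sum>S\<in>Pow {..<n}. tensor_norm_sq d n (tensor_op d n (proj_factor \<theta> S) v))
      = (\<Sum>S\<in>Pow {..<n}. tensor_form d n (proj_factor \<theta> S) v)"
    unfolding of_real_sum by (intro sum.cong refl) (simp add: tensor_form_proj_factor[OF h])
  also have "\<dots> = tensor_form d n (\<lambda>i. id_mat) v" by (rule sum_proj_tensor_form)
  also have "\<dots> = of_real (tensor_norm_sq d n v)" by (rule tensor_form_id_mat)
  finally show ?thesis by (simp only: of_real_eq_iff)
qed

lemma proj_perp_theta_eq_0:
  assumes h: "hinner d \<theta> \<theta> = 1" and a: "a < d"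
  shows "(\<Sum>y<d. proj_perp \<theta> a y * \<theta> y) = 0"
proof -
  have "(\<Sum>y<d. proj_perp \<theta> a y * \<theta> y) = (\<Sum>y<d. id_mat a y * \<theta> y) - \<theta> a * (\<Sum>y<d. cnj (\<theta> y) * \<theta> y)"
    unfolding proj_perp_def proj_onto_def by (simp add: algebra_simps sum_subtractf sum_distrib_left)
  then show ?thesis
    using h a by (simp add: hinner_def id_mat_def if_zero_simps sum.delta cong: if_cong)
qed

section \<open>Almost power states\<close>

lemma permutes_meets_large_subset:
  assumes \<pi>: "\<pi> permutes {..<n}" and S: "S \<subseteq> {..<n}" and cS: "card S > r"
  obtains i where "i < n - r" "\<pi> i \<in> S"
proof -
  define T where "T = \<pi> ` {..<n - r}"
  have "inj_on \<pi> {..<n - r}" by (rule permutes_inj_on[OF \<pi>])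
  then have cT: "card T = n - r" by (simp add: T_def card_image)
  have TS: "T \<subseteq> {..<n}" unfolding T_def using permutes_in_image[OF \<pi>] by force
  have "S \<inter> T \<noteq> {}"
  proof
    assume "S \<inter> T = {}"
    then have "card S + card T = card (S \<union> T)"
      using finite_subset[OF S] finite_subset[OF TS] by (simp add: card_Un_disjoint)
    also have "\<dots> \<le> card {..<n}" using S TS by (intro card_mono) auto
    finally show False using cS cT by simp
  qed
  then obtain i where "i < n - r" "\<pi> i \<in> S" unfolding T_def by blast
  then show ?thesis by (rule that)
qed

lemma perm_power_tensor_factor:
  assumes \<pi>: "\<pi> permutes {..<n}" and i0: "i0 < n - r"
  obtains Q where "\<And>ys. length ys = n \<Longrightarrow> perm_vec \<pi> (power_tensor \<theta> (n - r) \<psi>) ys = \<theta> (ys ! \<pi> i0) * Q ys"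
    and "\<And>ys y. length ys = n \<Longrightarrow> Q (ys[\<pi> i0 := y]) = Q ys"
proof -
  define Q where "Q ys = (\<Prod>i\<in>{..<n-r}-{i0}. \<theta> (ys ! \<pi> i)) * \<psi> (drop (n-r) (permute_list \<pi> ys))" for ys
  have \<pi>i: "\<pi> i \<noteq> \<pi> i0" if "i < n" "i \<noteq> i0" for i
    using permutes_inj_on[OF \<pi>] that i0 by (auto dest: inj_onD)
  have "perm_vec \<pi> (power_tensor \<theta> (n - r) \<psi>) ys = \<theta> (ys ! \<pi> i0) * Q ys" if len: "length ys = n" for ys
  proof -
    have "perm_vec \<pi> (power_tensor \<theta> (n - r) \<psi>) ys
        = (\<Prod>i<n-r. \<theta> (ys ! \<pi> i)) * \<psi> (drop (n-r) (permute_list \<pi> ys))"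
      unfolding perm_vec_def power_tensor_def using \<pi> len
      by (intro arg_cong2[where f="(*)"] prod.cong refl) (auto simp: permute_list_nth)
    also have "(\<Prod>i<n-r. \<theta> (ys ! \<pi> i)) = \<theta> (ys ! \<pi> i0) * (\<Prod>i\<in>{..<n-r}-{i0}. \<theta> (ys ! \<pi> i))"
      using i0 by (subst prod.remove[of "{..<n-r}" i0]) auto
    finally show ?thesis by (simp add: Q_def mult.assoc)
  qed
  moreover have "Q (ys[\<pi> i0 := y]) = Q ys" if len: "length ys = n" for ys y
  proof -
    have "(\<Prod>i\<in>{..<n-r}-{i0}. \<theta> (ys[\<pi> i0 := y] ! \<pi> i)) = (\<Prod>i\<in>{..<n-r}-{i0}. \<theta> (ys ! \<pi> i))"
    proof (rule prod.cong[OF refl])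
      fix i assume "i \<in> {..<n-r}-{i0}"
      then have "\<pi> i \<noteq> \<pi> i0" by (intro \<pi>i) auto
      then show "\<theta> (ys[\<pi> i0 := y] ! \<pi> i) = \<theta> (ys ! \<pi> i)" by simp
    qed
    moreover have "drop (n-r) (permute_list \<pi> (ys[\<pi> i0 := y])) = drop (n-r) (permute_list \<pi> ys)"
    proof (rule nth_equalityI)
      fix k assume "k < length (drop (n-r) (permute_list \<pi> (ys[\<pi> i0 := y])))"
      then have k: "n - r + k < n" using len by simp
      then have "\<pi> (n - r + k) \<noteq> \<pi> i0" using \<pi>i[OF k] i0 by auto
      then show "drop (n-r) (permute_list \<pi> (ys[\<pi> i0 := y])) ! k = drop (n-r) (permute_list \<pi> ys) ! k"
        using \<pi> len k by (simp add: permute_list_nth)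
    qed simp
    ultimately show ?thesis by (simp add: Q_def)
  qed
  ultimately show ?thesis using that by blast
qed

lemma tensor_op_proj_factor_vanishes:
  assumes h: "hinner d \<theta> \<theta> = 1" and j: "j \<in> S" "j < n" and xs: "xs \<in> idx d n"
    and v: "\<And>ys. ys \<in> idx d n \<Longrightarrow> v ys = \<theta> (ys ! j) * Q ys"
    and Q: "\<And>ys y. ys \<in> idx d n \<Longrightarrow> y < d \<Longrightarrow> Q (ys[j := y]) = Q ys"
  shows "tensor_op d n (proj_factor \<theta> S) v xs = 0"
proof -
  define R where "R ys = (\<Prod>i\<in>{..<n}-{j}. proj_factor \<theta> S i (xs!i) (ys!i)) * Q ys" for ys
  have split: "(\<Prod>i<n. proj_factor \<theta> S i (xs!i) (ys!i)) * v ys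
        = proj_perp \<theta> (xs!j) (ys!j) * \<theta> (ys!j) * R ys" if "ys \<in> idx d n" for ys
    using j v[OF that] by (simp add: R_def prod.remove[of "{..<n}" j] proj_factor_def mult_ac)
  have R: "R (ys[j := y]) = R ys" if "ys \<in> idx d n" "y < d" for ys y
    using Q[OF that] unfolding R_def by (intro arg_cong2[where f="(*)"] prod.cong refl) auto
  have "tensor_op d n (proj_factor \<theta> S) v xs = (\<Sum>ys\<in>idx d n. (proj_perp \<theta> (xs!j) (ys!j) * \<theta> (ys!j)) * R ys)"
    unfolding tensor_op_def using split by (intro sum.cong refl) auto
  also have "\<dots> = 0"
    using proj_perp_theta_eq_0[OF h idx_nth_less[OF xs j(2)]] by (intro sum_idx_coord_zero[OF j(2) _ R])
  finally show ?thesis .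
qed

lemma tensor_op_proj_factor_Vset:
  assumes h: "hinner d \<theta> \<theta> = 1"
    and \<pi>: "\<pi> permutes {..<n}" and S: "S \<subseteq> {..<n}" and cS: "card S > r"
    and xs: "xs \<in> idx d n"
  shows "tensor_op d n (proj_factor \<theta> S) (perm_vec \<pi> (power_tensor \<theta> (n - r) \<psi>)) xs = 0"
proof -
  \<comment> \<open>more than r projections orthogonal to \<theta> must hit one of the n - r factors equal to \<theta>\<close>
  obtain i0 where i0: "i0 < n - r" "\<pi> i0 \<in> S"
    using permutes_meets_large_subset[OF \<pi> S cS] .
  obtain Q where fac: "\<And>ys. length ys = n \<Longrightarrow> perm_vec \<pi> (power_tensor \<theta> (n - r) \<psi>) ys = \<theta> (ys ! \<pi> i0) * Q ys"
    and inv: "\<And>ys y. length ys = n \<Longrightarrow> Q (ys[\<pi> i0 := y]) = Q ys"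
    using perm_power_tensor_factor[OF \<pi> i0(1), where \<theta>=\<theta> and \<psi>=\<psi>] by blast
  have "\<pi> i0 < n" using i0 S by auto
  then show ?thesis
    by (rule tensor_op_proj_factor_vanishes[OF h i0(2) _ xs, where Q=Q]) (auto simp: idx_def fac inv)
qed

lemma tensor_op_proj_factor_span:
  assumes h: "hinner d \<theta> \<theta> = 1"
    and sp: "in_tspan d n (Vset d \<theta> n r) \<phi>"
    and S: "S \<subseteq> {..<n}" and cS: "card S > r" and xs: "xs \<in> idx d n"
  shows "tensor_op d n (proj_factor \<theta> S) \<phi> xs = 0"
proof -
  obtain F c where F: "finite F" "F \<subseteq> Vset d \<theta> n r" and eq: "\<forall>ys\<in>idx d n. \<phi> ys = (\<Sum>u\<in>F. c u * u ys)"
    using sp unfolding in_tspan_def by blast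
  have z: "tensor_op d n (proj_factor \<theta> S) u xs = 0" if "u \<in> F" for u
  proof -
    from that F(2) obtain \<pi> \<psi> where "u = perm_vec \<pi> (power_tensor \<theta> (n - r) \<psi>)" "\<pi> permutes {..<n}"
      unfolding Vset_def by blast
    then show ?thesis using tensor_op_proj_factor_Vset[OF h _ S cS xs] by simp
  qed
  have "tensor_op d n (proj_factor \<theta> S) \<phi> xs = (\<Sum>u\<in>F. c u * tensor_op d n (proj_factor \<theta> S) u xs)"
    unfolding tensor_op_def using eq
    by (simp add: sum_distrib_left sum_distrib_right mult_ac sum.swap[of _ F] cong: sum.cong)
  also have "\<dots> = 0" using z by simp
  finally show ?thesis .
qed

lemma span_eq_sum_small_proj:
  assumes h: "hinner d \<theta> \<theta> = 1"
    and sp: "in_tspan d n (Vset d \<theta> n r) \<phi>" and xs: "xs \<in> idx d n"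
  shows "\<phi> xs = (\<Sum>S\<in>{S\<in>Pow {..<n}. card S \<le> r}. tensor_op d n (proj_factor \<theta> S) \<phi> xs)"
proof -
  have "\<phi> xs = (\<Sum>S\<in>Pow {..<n}. tensor_op d n (proj_factor \<theta> S) \<phi> xs)"
    using sum_proj_tensor_op[OF xs] by simp
  also have "\<dots> = (\<Sum>S\<in>{S\<in>Pow {..<n}. card S \<le> r}. tensor_op d n (proj_factor \<theta> S) \<phi> xs)"
    by (rule sum.mono_neutral_right) (auto intro: tensor_op_proj_factor_span[OF h sp _ _ xs])
  finally show ?thesis .
qed

section \<open>Outcome statistics\<close>

definition atypical_words :: "'w set \<Rightarrow> nat \<Rightarrow> ('w \<Rightarrow> real) \<Rightarrow> real \<Rightarrow> 'w list set" where
  "atypical_words W n P \<delta> = {ws. length ws = n \<and> set ws \<subseteq> W \<and> l1_dist W P (rel_freq ws) > \<delta>}"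

lemma atypical_words_subset: "atypical_words W n P \<delta> \<subseteq> lists_of W n"
  by (auto simp: atypical_words_def lists_of_def)

lemma outcome_dist_eq_qform: "outcome_dist d M \<theta> w = Re (qform d (M w) \<theta>)"
  by (simp add: outcome_dist_def qform_def)

lemma outcome_dist_nonneg:
  assumes "is_POVM d W M" and "w \<in> W"
  shows "outcome_dist d M \<theta> w \<ge> 0"
  using is_POVM_psd_mat[OF assms] unfolding outcome_dist_eq_qform psd_mat_def by blast

lemma sum_outcome_dist:
  assumes M: "is_POVM d W M" and \<theta>: "hinner d \<theta> \<theta> = 1"
  shows "(\<Sum>w\<in>W. outcome_dist d M \<theta> w) = 1"
proof -
  have "(\<Sum>w\<in>W. qform d (M w) \<theta>) = qform d (\<lambda>x y. \<Sum>w\<in>W. 1 * M w x y) \<theta>"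
    using qform_sum[where f="\<lambda>_. 1" and W=W and C=M and v=\<theta> and d=d] by simp
  also have "\<dots> = qform d id_mat \<theta>" by (rule qform_cong_mat) (simp add: is_POVM_sum_id[OF M])
  also have "\<dots> = 1" using \<theta> by (simp add: qform_id_mat hinner_def)
  finally show ?thesis unfolding outcome_dist_eq_qform by (metis Re_sum one_complex.sel(1))
qed

lemma sum_count_list_eq:
  assumes "finite A"
  shows "(\<Sum>w\<in>A. count_list ws w) = (\<Sum>i<length ws. if ws!i \<in> A then 1 else 0)"
proof (induction ws)
  case Nil
  then show ?case by simp
next
  case (Cons a ws)
  have "(\<Sum>w\<in>A. count_list (a # ws) w) = (\<Sum>w\<in>A. (if a = w then 1 else 0) + count_list ws w)"
    by (intro sum.cong refl) simp
  also have "\<dots> = (if a \<in> A then 1 else 0) + (\<Sum>w\<in>A. count_list ws w)"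
    using assms by (simp add: sum.distrib)
  also have "\<dots> = (\<Sum>i<length (a # ws). if (a # ws)!i \<in> A then 1 else 0)"
    using Cons by (simp del: sum.lessThan_Suc add: sum.lessThan_Suc_shift)
  finally show ?case .
qed

lemma exp_count_list:
  assumes "finite A" and ws: "length ws = n"
  shows "exp (l * real (\<Sum>w\<in>A. count_list ws w)) = (\<Prod>i<n. if ws!i \<in> A then exp l else 1)"
proof -
  have "exp (l * real (\<Sum>w\<in>A. count_list ws w)) = exp (\<Sum>i<n. l * (if ws!i \<in> A then 1 else 0))"
    using sum_count_list_eq[OF assms(1), of ws] ws by (auto simp: sum_distrib_left intro!: sum.cong)
  also have "\<dots> = (\<Prod>i<n. exp (l * (if ws!i \<in> A then 1 else 0)))" by (rule exp_sum) simp
  also have "\<dots> = (\<Prod>i<n. if ws!i \<in> A then exp l else 1)" by (intro prod.cong refl) simp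
  finally show ?thesis .
qed

lemma prod_if_in_const:
  fixes n :: nat
  assumes "S \<subseteq> {..<n}"
  shows "(\<Prod>i<n. if i \<in> S then c else 1) = c ^ card S"
proof -
  have "(\<Prod>i<n. if i \<in> S then c else 1) = (\<Prod>i\<in>{..<n} \<inter> {i. i \<in> S}. c) * (\<Prod>i\<in>{..<n} \<inter> - {i. i \<in> S}. 1)"
    by (rule prod.If_cases[OF finite_lessThan])
  also have "{..<n} \<inter> {i. i \<in> S} = S" using assms by auto
  finally show ?thesis by simp
qed

lemma prod_if_notin_const:
  fixes n :: nat
  assumes "S \<subseteq> {..<n}"
  shows "(\<Prod>i<n. if i \<in> S then 1 else c) = c ^ (n - card S)"
proof -
  have "(\<Prod>i<n. if i \<in> S then 1 else c) = (\<Prod>i\<in>{..<n} \<inter> {i. i \<in> S}. 1) * (\<Prod>i\<in>{..<n} \<inter> - {i. i \<in> S}. c)"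
    by (rule prod.If_cases[OF finite_lessThan])
  also have "{..<n} \<inter> - {i. i \<in> S} = {..<n} - S" by auto
  finally have e: "(\<Prod>i<n. if i \<in> S then 1 else c) = c ^ card ({..<n} - S)" by simp
  have "card ({..<n} - S) = n - card S" using assms by (simp add: card_Diff_subset finite_subset)
  then show ?thesis using e by simp
qed

lemma l1_dist_eq_twice_excess:
  fixes P f :: "'w \<Rightarrow> real"
  assumes "finite W" and "(\<Sum>w\<in>W. P w) = 1" and "(\<Sum>w\<in>W. f w) = 1"
  shows "l1_dist W P f = 2 * (\<Sum>w\<in>{w\<in>W. f w > P w}. f w - P w)"
proof -
  define A where "A = {w\<in>W. f w > P w}"
  have A: "A \<subseteq> W" by (auto simp: A_def)
  have "l1_dist W P f = (\<Sum>w\<in>A. \<bar>P w - f w\<bar>) + (\<Sum>w\<in>W - A. \<bar>P w - f w\<bar>)"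
    unfolding l1_dist_def using sum.subset_diff[OF A assms(1)] by (simp add: add.commute)
  also have "(\<Sum>w\<in>A. \<bar>P w - f w\<bar>) = (\<Sum>w\<in>A. f w - P w)"
    by (intro sum.cong refl) (auto simp: A_def)
  also have "(\<Sum>w\<in>W - A. \<bar>P w - f w\<bar>) = (\<Sum>w\<in>W - A. P w - f w)"
    by (intro sum.cong refl) (auto simp: A_def)
  moreover have "(\<Sum>w\<in>A. f w - P w) + (\<Sum>w\<in>W - A. f w - P w) = 0"
    using sum.subset_diff[OF A assms(1), of "\<lambda>w. f w - P w"] assms(2,3)
    by (simp add: sum_subtractf)
  ultimately show ?thesis
    by (simp add: A_def sum_subtractf)
qed

lemma l1_dist_gt_imp_frequent_subset:
  fixes P :: "'w \<Rightarrow> real"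
  assumes fW: "finite W" and P: "(\<Sum>w\<in>W. P w) = 1" "\<And>w. w \<in> W \<Longrightarrow> P w \<ge> 0"
    and ws: "ws \<in> atypical_words W n P \<delta>" and n: "n \<ge> 1" and \<delta>: "\<delta> \<ge> 0"
  obtains A where "A \<subseteq> W" "A \<noteq> {}" "card A \<le> n"
    "real (\<Sum>w\<in>A. count_list ws w) \<ge> real n * ((\<Sum>w\<in>A. P w) + \<delta> / 2)"
proof -
  have len: "length ws = n" and sws: "set ws \<subseteq> W" and far: "l1_dist W P (rel_freq ws) > \<delta>"
    using ws by (auto simp: atypical_words_def)
  have f: "rel_freq ws w = real (count_list ws w) / real n" for w
    by (simp add: rel_freq_def len)
  have "(\<Sum>w\<in>W. rel_freq ws w) = real (\<Sum>w\<in>W. count_list ws w) / real n"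
    by (simp add: f sum_divide_distrib)
  then have sumf: "(\<Sum>w\<in>W. rel_freq ws w) = 1"
    using sum_count_set[OF sws fW] len n by simp
  define A where "A = {w\<in>W. rel_freq ws w > P w}"
  have AW: "A \<subseteq> W" by (auto simp: A_def)
  have gt: "(\<Sum>w\<in>A. rel_freq ws w - P w) > \<delta> / 2"
    using far l1_dist_eq_twice_excess[OF fW P(1) sumf] by (simp add: A_def)
  then have Ane: "A \<noteq> {}" using \<delta> by auto
  have "A \<subseteq> set ws"
  proof
    fix w assume w: "w \<in> A"
    then have "rel_freq ws w > 0" using P(2) by (auto simp: A_def intro: le_less_trans)
    then show "w \<in> set ws" unfolding f using count_notin by fastforce
  qed
  then have cA: "card A \<le> n" using card_mono[of "set ws" A] card_length[of ws] len by simp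
  have "(\<Sum>w\<in>A. rel_freq ws w - P w) = real (\<Sum>w\<in>A. count_list ws w) / real n - (\<Sum>w\<in>A. P w)"
    by (simp add: sum_subtractf f sum_divide_distrib)
  then have "real (\<Sum>w\<in>A. count_list ws w) / real n > (\<Sum>w\<in>A. P w) + \<delta> / 2"
    using gt by linarith
  then have "real (\<Sum>w\<in>A. count_list ws w) > real n * ((\<Sum>w\<in>A. P w) + \<delta> / 2)"
    using n by (simp add: field_simps)
  then show ?thesis using that[OF AW Ane cA] by simp
qed

lemma sum_weighted_sandwich_proj_factor:
  fixes z :: "'w \<Rightarrow> real"
  assumes M: "is_POVM d W M" and \<theta>: "hinner d \<theta> \<theta> = 1" and x: "x < d" and y: "y < d"
  shows "(\<Sum>w\<in>W. of_real (if i \<in> S then 1 else z w) * sandwich d (proj_factor \<theta> S i) (M w) x y)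
       = (if i \<in> S then 1 else of_real (\<Sum>w\<in>W. z w * outcome_dist d M \<theta> w)) * proj_factor \<theta> S i x y"
proof -
  have lin: "(\<Sum>w\<in>W. of_real (if i \<in> S then 1 else z w) * sandwich d (proj_factor \<theta> S i) (M w) x y)
      = sandwich d (proj_factor \<theta> S i) (\<lambda>x y. \<Sum>w\<in>W. of_real (if i \<in> S then 1 else z w) * M w x y) x y"
    by (rule sandwich_sum[symmetric])
  show ?thesis
  proof (cases "i \<in> S")
    case True
    have "sandwich d (proj_factor \<theta> S i) (\<lambda>x y. \<Sum>w\<in>W. of_real (if i \<in> S then 1 else z w) * M w x y) x y
        = sandwich d (proj_factor \<theta> S i) id_mat x y"
      by (rule sandwich_cong) (simp add: True is_POVM_sum_id[OF M])
    also have "\<dots> = proj_factor \<theta> S i x y" by (rule sandwich_id_mat_proj_factor[OF \<theta> x y])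
    finally show ?thesis using lin True by simp
  next
    case False
    \<comment> \<open>off S the factor projects onto \<theta>, so only the expectation in the state \<theta> survives\<close>
    have "sandwich d (proj_factor \<theta> S i) (\<lambda>x y. \<Sum>w\<in>W. of_real (if i \<in> S then 1 else z w) * M w x y) x y
        = qform d (\<lambda>x y. \<Sum>w\<in>W. of_real (z w) * M w x y) \<theta> * proj_onto \<theta> x y"
      using False by (simp add: proj_factor_def sandwich_proj_onto)
    also have "qform d (\<lambda>x y. \<Sum>w\<in>W. of_real (z w) * M w x y) \<theta> = (\<Sum>w\<in>W. of_real (z w) * qform d (M w) \<theta>)"
      by (rule qform_sum)
    also have "\<dots> = of_real (\<Sum>w\<in>W. z w * outcome_dist d M \<theta> w)"
      unfolding of_real_sum
      by (intro sum.cong refl) (simp add: outcome_dist_eq_qform psd_mat_qform_real[OF is_POVM_psd_mat[OF M], symmetric])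
    finally show ?thesis using lin False by (simp add: proj_factor_def)
  qed
qed

lemma weighted_born_prob_proj:
  fixes z :: "'w \<Rightarrow> real"
  assumes M: "is_POVM d W M" and \<theta>: "hinner d \<theta> \<theta> = 1" and S: "S \<subseteq> {..<n}"
  shows "(\<Sum>ws\<in>lists_of W n. (\<Prod>i<n. if i \<in> S then 1 else z (ws!i))
            * born_prob d n M ws (tensor_op d n (proj_factor \<theta> S) v))
       = (\<Sum>w\<in>W. z w * outcome_dist d M \<theta> w) ^ (n - card S)
            * tensor_norm_sq d n (tensor_op d n (proj_factor \<theta> S) v)"
proof -
  define C where "C ws = tensor_form d n (\<lambda>i. sandwich d (proj_factor \<theta> S i) (M (ws!i))) v" for ws
  define \<mu> where "\<mu> = (\<Sum>w\<in>W. z w * outcome_dist d M \<theta> w)"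
  have born: "complex_of_real (born_prob d n M ws (tensor_op d n (proj_factor \<theta> S) v)) = C ws"
    if "ws \<in> lists_of W n" for ws
    using tensor_form_sandwich_real[OF M that]
    by (simp add: C_def born_prob_eq_tensor_form tensor_form_tensor_op)
  have "complex_of_real (\<Sum>ws\<in>lists_of W n. (\<Prod>i<n. if i \<in> S then 1 else z (ws!i))
            * born_prob d n M ws (tensor_op d n (proj_factor \<theta> S) v))
      = (\<Sum>ws\<in>lists_of W n. (\<Prod>i<n. of_real (if i \<in> S then 1 else z (ws!i))) * C ws)"
    unfolding of_real_sum by (intro sum.cong refl) (simp add: born flip: of_real_prod)
  also have "\<dots> = tensor_form d n (\<lambda>i x y. \<Sum>w\<in>W. of_real (if i \<in> S then 1 else z w)
                    * sandwich d (proj_factor \<theta> S i) (M w) x y) v"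
    unfolding C_def by (rule sum_lists_of_tensor_form[OF is_POVM_finite[OF M]])
  also have "\<dots> = tensor_form d n (\<lambda>i x y. (if i \<in> S then 1 else of_real \<mu>) * proj_factor \<theta> S i x y) v"
    unfolding \<mu>_def by (rule tensor_form_cong) (rule sum_weighted_sandwich_proj_factor[OF M \<theta>])
  also have "\<dots> = (\<Prod>i<n. if i \<in> S then 1 else of_real \<mu>) * tensor_form d n (proj_factor \<theta> S) v"
    by (rule tensor_form_scale)
  also have "\<dots> = of_real (\<mu> ^ (n - card S) * tensor_norm_sq d n (tensor_op d n (proj_factor \<theta> S) v))"
    unfolding prod_if_notin_const[OF S] tensor_form_proj_factor[OF \<theta>] by simp
  finally show ?thesis unfolding \<mu>_def of_real_eq_iff .
qed

lemma exp_count_list_le: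
  assumes A: "finite A" and ws: "length ws = n" and S: "S \<subseteq> {..<n}" and l: "l \<ge> 0"
  shows "exp (l * real (\<Sum>w\<in>A. count_list ws w))
       \<le> exp l ^ card S * (\<Prod>i<n. if i \<in> S then 1 else if ws!i \<in> A then exp l else 1)"
proof -
  define z where "z w = (if w \<in> A then exp l else 1)" for w
  have z: "0 \<le> z w" "z w \<le> exp l" for w using l by (auto simp: z_def)
  have "exp (l * real (\<Sum>w\<in>A. count_list ws w)) = (\<Prod>i<n. z (ws!i))"
    using exp_count_list[OF A ws] by (simp add: z_def)
  also have "\<dots> = (\<Prod>i<n. if i \<in> S then z (ws!i) else 1) * (\<Prod>i<n. if i \<in> S then 1 else z (ws!i))"
    by (subst prod.distrib[symmetric]) (intro prod.cong refl; simp)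
  also have "\<dots> \<le> (\<Prod>i<n. if i \<in> S then exp l else 1) * (\<Prod>i<n. if i \<in> S then 1 else z (ws!i))"
    using z by (intro mult_right_mono prod_mono prod_nonneg) auto
  finally show ?thesis unfolding prod_if_in_const[OF S] z_def .
qed

lemma mgf_proj_le:
  assumes M: "is_POVM d W M" and \<theta>: "hinner d \<theta> \<theta> = 1"
    and S: "S \<subseteq> {..<n}" and A: "A \<subseteq> W" and l: "l \<ge> 0"
  shows "(\<Sum>ws\<in>lists_of W n. exp (l * real (\<Sum>w\<in>A. count_list ws w))
            * born_prob d n M ws (tensor_op d n (proj_factor \<theta> S) v))
    \<le> exp l ^ card S * (1 + (exp l - 1) * (\<Sum>w\<in>A. outcome_dist d M \<theta> w)) ^ (n - card S)
       * tensor_norm_sq d n (tensor_op d n (proj_factor \<theta> S) v)"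
proof -
  define z where "z w = (if w \<in> A then exp l else 1)" for w
  have fW: "finite W" using is_POVM_finite[OF M] .
  have count: "exp (l * real (\<Sum>w\<in>A. count_list ws w))
      \<le> exp l ^ card S * (\<Prod>i<n. if i \<in> S then 1 else z (ws!i))" if "ws \<in> lists_of W n" for ws
    using exp_count_list_le[OF finite_subset[OF A fW] _ S l, of ws] that
    unfolding z_def by (simp add: lists_of_def)
  have "(\<Sum>ws\<in>lists_of W n. exp (l * real (\<Sum>w\<in>A. count_list ws w))
            * born_prob d n M ws (tensor_op d n (proj_factor \<theta> S) v))
      \<le> (\<Sum>ws\<in>lists_of W n. exp l ^ card S * (\<Prod>i<n. if i \<in> S then 1 else z (ws!i))
            * born_prob d n M ws (tensor_op d n (proj_factor \<theta> S) v))"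
    using count born_prob_nonneg[OF M] by (intro sum_mono mult_right_mono) auto
  also have "\<dots> = exp l ^ card S * (\<Sum>w\<in>W. z w * outcome_dist d M \<theta> w) ^ (n - card S)
       * tensor_norm_sq d n (tensor_op d n (proj_factor \<theta> S) v)"
    by (simp only: mult.assoc weighted_born_prob_proj[OF M \<theta> S] flip: sum_distrib_left)
  also have "(\<Sum>w\<in>W. z w * outcome_dist d M \<theta> w) = 1 + (exp l - 1) * (\<Sum>w\<in>A. outcome_dist d M \<theta> w)"
  proof -
    have "(\<Sum>w\<in>W. z w * outcome_dist d M \<theta> w)
        = (\<Sum>w\<in>W. outcome_dist d M \<theta> w) + (\<Sum>w\<in>W. if w \<in> A then (exp l - 1) * outcome_dist d M \<theta> w else 0)"
      unfolding sum.distrib[symmetric] by (intro sum.cong refl) (simp add: z_def algebra_simps)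
    also have "(\<Sum>w\<in>W. if w \<in> A then (exp l - 1) * outcome_dist d M \<theta> w else 0)
        = (exp l - 1) * (\<Sum>w\<in>A. outcome_dist d M \<theta> w)"
      using A fW by (simp add: sum.If_cases Int_absorb1 sum_distrib_left)
    finally show ?thesis using sum_outcome_dist[OF M \<theta>] by simp
  qed
  finally show ?thesis .
qed

section \<open>Chernoff bound\<close>

lemma quadratic_chernoff_ineq:
  fixes x t :: real
  assumes x: "0 \<le> x" and t: "0 \<le> t" and xt: "2 * x \<le> t\<^sup>2"
  shows "t\<^sup>2 * (1 - x) \<le> 2 * (t - x)\<^sup>2"
proof -
  define \<sigma> where "\<sigma> = sqrt (2 * x)"
  define u where "u = t - \<sigma>"
  have \<sigma>: "\<sigma> \<ge> 0" "x = \<sigma>\<^sup>2 / 2" using x by (simp_all add: \<sigma>_def)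
  have u: "u \<ge> 0" using real_sqrt_le_mono[OF xt] t by (simp add: u_def \<sigma>_def)
  have "t = \<sigma> + u" by (simp add: u_def)
  \<comment> \<open>substituting x = \<sigma>^2/2 and t = \<sigma> + u exhibits the difference as a sum of nonnegative terms\<close>
  then have "2 * (t - x)\<^sup>2 - t\<^sup>2 * (1 - x) = \<sigma>\<^sup>2 * (1 - \<sigma>)\<^sup>2 + u * \<sigma> * ((\<sigma> - 1)\<^sup>2 + 1) + (1 + \<sigma>\<^sup>2 / 2) * u\<^sup>2"
    unfolding \<sigma>(2) by (simp add: power2_eq_square algebra_simps)
  also have "\<dots> \<ge> 0" using \<sigma>(1) u by (intro add_nonneg_nonneg mult_nonneg_nonneg) auto
  finally show ?thesis by simp
qed

lemma chernoff_rate_le: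
  fixes n s :: nat and t :: real
  assumes sn: "2 * s \<le> n" and n: "n \<ge> 1" and t: "t \<ge> 0" and st: "2 * real s \<le> real n * t\<^sup>2"
  shows "real s \<le> real n * t"
    and "real n * t\<^sup>2 * (real n - real s) \<le> 2 * (real n * t - real s)\<^sup>2"
proof -
  define x where "x = real s / real n"
  have n0: "real n > 0" using n by simp
  have x0: "x \<ge> 0" by (simp add: x_def)
  have xt: "2 * x \<le> t\<^sup>2" using st n0 by (simp add: x_def field_simps)
  have "x \<le> 1/2" using sn n0 by (simp add: x_def field_simps)
  then have "x * x \<le> x * 2" using x0 by (intro mult_left_mono) auto
  then have "x\<^sup>2 \<le> 2 * x" by (simp add: power2_eq_square mult.commute)
  then have "x\<^sup>2 \<le> t\<^sup>2" using xt by linarith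
  then have "x \<le> t" using t by (rule power2_le_imp_le)
  then show "real s \<le> real n * t" using n0 by (simp add: x_def field_simps)
  have "(real n)\<^sup>2 * (t\<^sup>2 * (1 - x)) \<le> (real n)\<^sup>2 * (2 * (t - x)\<^sup>2)"
    using quadratic_chernoff_ineq[OF x0 t xt] by (simp add: mult_left_mono)
  moreover have "(real n)\<^sup>2 * (t\<^sup>2 * (1 - x)) = real n * t\<^sup>2 * (real n - real s)"
    using n0 by (simp add: x_def field_simps power2_eq_square)
  moreover have "(real n)\<^sup>2 * (2 * (t - x)\<^sup>2) = 2 * (real n * t - real s)\<^sup>2"
    using n0 by (simp add: x_def field_simps power2_eq_square)
  ultimately show "real n * t\<^sup>2 * (real n - real s) \<le> 2 * (real n * t - real s)\<^sup>2"
    by simp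
qed

lemma chernoff_exponent_le:
  fixes n s :: nat and t p :: real
  assumes sn: "2 * s \<le> n" and n: "n \<ge> 1" and t: "t > 0" and st: "2 * real s \<le> real n * t\<^sup>2" and p: "p \<ge> 0"
  defines "l \<equiv> 4 * (real n * t - real s) / (real n - real s)"
  shows "l \<ge> 0"
    and "exp (- l * (real n * (p + t))) * exp l ^ s * (1 + (exp l - 1) * p) ^ (n - s) \<le> exp (- real n * t\<^sup>2)"
proof -
  define m where "m = real n - real s"
  define D where "D = real n * t - real s"
  have m0: "m > 0" using sn n by (simp add: m_def)
  have D0: "D \<ge> 0" using chernoff_rate_le(1)[OF sn n _ st] t by (simp add: D_def)
  have lm: "l * m = 4 * D" using m0 by (simp add: l_def D_def m_def)
  show l0: "l \<ge> 0" unfolding l_def using D0 m0 by (simp add: D_def m_def)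
  define \<mu> where "\<mu> = 1 + (exp l - 1) * p"
  have \<mu>0: "\<mu> > 0" unfolding \<mu>_def using p l0 by (simp add: add_pos_nonneg)
  have "ln \<mu> \<le> l * p + l\<^sup>2 / 8"
    using Hoeffdings_lemma_aux[OF l0 p] by (simp add: \<mu>_def mult.commute)
  moreover have "\<mu> ^ (n - s) = exp (m * ln \<mu>)"
  proof -
    have "real (n - s) = m" using sn by (simp add: m_def)
    then show ?thesis using \<mu>0 by (metis exp_ln exp_of_nat_mult)
  qed
  ultimately have "\<mu> ^ (n - s) \<le> exp (m * (l * p + l\<^sup>2 / 8))"
    using m0 by simp
  then have "exp (- l * (real n * (p + t))) * exp l ^ s * \<mu> ^ (n - s)
      \<le> exp (- l * (real n * (p + t))) * exp l ^ s * exp (m * (l * p + l\<^sup>2 / 8))"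
    by (intro mult_left_mono) auto
  also have "\<dots> = exp (- l * D - l * real s * p + m * l\<^sup>2 / 8)"
    by (simp add: exp_of_nat_mult[symmetric] exp_add[symmetric] m_def D_def algebra_simps)
  also have "\<dots> \<le> exp (- l * D + m * l\<^sup>2 / 8)"
    using l0 p by simp
  \<comment> \<open>l was chosen to minimise this exponent\<close>
  also have "- l * D + m * l\<^sup>2 / 8 = - l * D / 2"
    using lm by (simp add: power2_eq_square algebra_simps)
  also have "\<dots> = - 2 * D\<^sup>2 / m"
    using m0 by (simp add: l_def D_def m_def power2_eq_square field_simps)
  also have "- 2 * D\<^sup>2 / m \<le> - real n * t\<^sup>2"
    using chernoff_rate_le(2)[OF sn n _ st] t m0 by (simp add: D_def m_def field_simps)
  finally show "exp (- l * (real n * (p + t))) * exp l ^ s * (1 + (exp l - 1) * p) ^ (n - s) \<le> exp (- real n * t\<^sup>2)"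
    by (simp add: \<mu>_def)
qed

lemma sum_le_union_exp_markov:
  fixes q :: "'a \<Rightarrow> real" and c :: "'i \<Rightarrow> 'a \<Rightarrow> real" and T :: "'i \<Rightarrow> real"
  assumes L: "finite L" "B \<subseteq> L" and I: "finite I" and q: "\<And>x. x \<in> L \<Longrightarrow> q x \<ge> 0"
    and cover: "\<And>x. x \<in> B \<Longrightarrow> \<exists>i\<in>I. T i \<le> c i x" and l: "l \<ge> 0"
  shows "(\<Sum>x\<in>B. q x) \<le> (\<Sum>i\<in>I. exp (- l * T i) * (\<Sum>x\<in>L. exp (l * c i x) * q x))"
proof -
  have "(\<Sum>x\<in>B. q x) \<le> (\<Sum>x\<in>B. \<Sum>i\<in>I. if T i \<le> c i x then q x else 0)"
  proof (rule sum_mono)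
    fix x assume x: "x \<in> B"
    then obtain i where "i \<in> I" "T i \<le> c i x" using cover by blast
    then show "q x \<le> (\<Sum>i\<in>I. if T i \<le> c i x then q x else 0)"
      using member_le_sum[of i I "\<lambda>i. if T i \<le> c i x then q x else 0"] I q x L(2) by auto
  qed
  also have "\<dots> = (\<Sum>i\<in>I. \<Sum>x\<in>B. if T i \<le> c i x then q x else 0)"
    by (rule sum.swap)
  also have "\<dots> \<le> (\<Sum>i\<in>I. \<Sum>x\<in>L. if T i \<le> c i x then q x else 0)"
    using L q by (intro sum_mono sum_mono2) auto
  also have "\<dots> \<le> (\<Sum>i\<in>I. \<Sum>x\<in>L. exp (l * (c i x - T i)) * q x)"
  proof (intro sum_mono)
    fix i x assume x: "x \<in> L"
    show "(if T i \<le> c i x then q x else 0) \<le> exp (l * (c i x - T i)) * q x"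
    proof (cases "T i \<le> c i x")
      case True
      then have "1 \<le> exp (l * (c i x - T i))" using l by simp
      from mult_right_mono[OF this q[OF x]] show ?thesis using True by simp
    qed (use q[OF x] in simp)
  qed
  also have "\<dots> = (\<Sum>i\<in>I. exp (- l * T i) * (\<Sum>x\<in>L. exp (l * c i x) * q x))"
    by (simp add: sum_distrib_left algebra_simps exp_diff exp_minus field_simps)
  finally show ?thesis .
qed

lemma chernoff_subset_proj_le:
  assumes M: "is_POVM d W M" and \<theta>: "hinner d \<theta> \<theta> = 1" and S: "S \<subseteq> {..<n}" and n: "n \<ge> 1"
    and t: "t > 0" and sn: "2 * card S \<le> n" and st: "2 * real (card S) \<le> real n * t\<^sup>2" and A: "A \<subseteq> W"
  defines "l \<equiv> 4 * (real n * t - real (card S)) / (real n - real (card S))"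
  shows "exp (- l * (real n * ((\<Sum>w\<in>A. outcome_dist d M \<theta> w) + t)))
           * (\<Sum>ws\<in>lists_of W n. exp (l * real (\<Sum>w\<in>A. count_list ws w))
                * born_prob d n M ws (tensor_op d n (proj_factor \<theta> S) v))
         \<le> exp (- real n * t\<^sup>2) * tensor_norm_sq d n (tensor_op d n (proj_factor \<theta> S) v)"
proof -
  define P where "P = (\<Sum>w\<in>A. outcome_dist d M \<theta> w)"
  define N where "N = tensor_norm_sq d n (tensor_op d n (proj_factor \<theta> S) v)"
  have P: "P \<ge> 0"
    unfolding P_def using outcome_dist_nonneg[OF M] A by (intro sum_nonneg) auto
  have l: "l \<ge> 0" unfolding l_def by (rule chernoff_exponent_le(1)[OF sn n t st order.refl])
  have "exp (- l * (real n * (P + t)))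
           * (\<Sum>ws\<in>lists_of W n. exp (l * real (\<Sum>w\<in>A. count_list ws w))
                * born_prob d n M ws (tensor_op d n (proj_factor \<theta> S) v))
      \<le> exp (- l * (real n * (P + t))) * (exp l ^ card S * (1 + (exp l - 1) * P) ^ (n - card S) * N)"
    unfolding P_def N_def by (intro mult_left_mono mgf_proj_le[OF M \<theta> S A l]) simp
  also have "\<dots> = (exp (- l * (real n * (P + t))) * exp l ^ card S * (1 + (exp l - 1) * P) ^ (n - card S)) * N"
    by (simp only: mult.assoc)
  also have "\<dots> \<le> exp (- real n * t\<^sup>2) * N"
    unfolding l_def N_def
    by (rule mult_right_mono[OF chernoff_exponent_le(2)[OF sn n t st P] tensor_norm_sq_nonneg])
  finally show ?thesis unfolding P_def N_def .
qed

lemma bad_prob_proj_le: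
  assumes M: "is_POVM d W M" and \<theta>: "hinner d \<theta> \<theta> = 1"
    and S: "S \<subseteq> {..<n}" and n: "n \<ge> 1" and \<delta>: "\<delta> > 0"
    and sn: "2 * card S \<le> n" and st: "2 * real (card S) \<le> real n * (\<delta> / 2)\<^sup>2"
  shows "(\<Sum>ws\<in>atypical_words W n (outcome_dist d M \<theta>) \<delta>. born_prob d n M ws (tensor_op d n (proj_factor \<theta> S) v))
         \<le> real (card {A. A \<subseteq> W \<and> A \<noteq> {} \<and> card A \<le> n}) * exp (- real n * (\<delta> / 2)\<^sup>2)
            * tensor_norm_sq d n (tensor_op d n (proj_factor \<theta> S) v)"
proof -
  define P where "P = outcome_dist d M \<theta>"
  define a where "a = tensor_op d n (proj_factor \<theta> S) v"
  define AA where "AA = {A. A \<subseteq> W \<and> A \<noteq> {} \<and> card A \<le> n}"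
  define t where "t = \<delta> / 2"
  define l where "l = 4 * (real n * t - real (card S)) / (real n - real (card S))"
  define T where "T A = real n * ((\<Sum>w\<in>A. P w) + t)" for A
  have fW: "finite W" using is_POVM_finite[OF M] .
  have t: "t > 0" using \<delta> by (simp add: t_def)
  have st': "2 * real (card S) \<le> real n * t\<^sup>2" using st by (simp add: t_def)
  have P: "(\<Sum>w\<in>W. P w) = 1" "\<And>w. w \<in> W \<Longrightarrow> P w \<ge> 0"
    unfolding P_def using sum_outcome_dist[OF M \<theta>] outcome_dist_nonneg[OF M] by auto
  have l: "l \<ge> 0" unfolding l_def by (rule chernoff_exponent_le(1)[OF sn n t st' order.refl])
  have "AA \<subseteq> Pow W" by (auto simp: AA_def)
  then have fAA: "finite AA" using fW by (simp add: finite_subset)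
  have "(\<Sum>ws\<in>atypical_words W n P \<delta>. born_prob d n M ws a)
      \<le> (\<Sum>A\<in>AA. exp (- l * T A)
            * (\<Sum>ws\<in>lists_of W n. exp (l * real (\<Sum>w\<in>A. count_list ws w)) * born_prob d n M ws a))"
  proof (rule sum_le_union_exp_markov[OF finite_lists_of[OF fW] atypical_words_subset fAA _ _ l])
    show "born_prob d n M ws a \<ge> 0" if "ws \<in> lists_of W n" for ws
      using born_prob_nonneg[OF M that] .
    show "\<exists>A\<in>AA. T A \<le> real (\<Sum>w\<in>A. count_list ws w)" if ws: "ws \<in> atypical_words W n P \<delta>" for ws
    proof -
      obtain A where "A \<subseteq> W" "A \<noteq> {}" "card A \<le> n" "real (\<Sum>w\<in>A. count_list ws w) \<ge> T A"
        using l1_dist_gt_imp_frequent_subset[OF fW P ws n] \<delta> unfolding T_def t_def by auto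
      then show ?thesis unfolding AA_def by blast
    qed
  qed
  also have "\<dots> \<le> (\<Sum>A\<in>AA. exp (- real n * t\<^sup>2) * tensor_norm_sq d n a)"
    unfolding T_def P_def a_def l_def
    by (intro sum_mono chernoff_subset_proj_le[OF M \<theta> S n t sn st']) (simp add: AA_def)
  also have "\<dots> = real (card AA) * exp (- real n * t\<^sup>2) * tensor_norm_sq d n a"
    by simp
  finally show ?thesis unfolding a_def AA_def t_def P_def .
qed

section \<open>Counting\<close>

lemma entropy_ratio_has_derivative:
  assumes "0 < x" "x < 1"
  shows "((\<lambda>x. - ln x - (1 / x - 1) * ln (1 - x)) has_real_derivative (ln (1 - x) / x\<^sup>2)) (at x)"
proof -
  have "((\<lambda>x. - ln x - (1 / x - 1) * ln (1 - x)) has_real_derivative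
          (- (1 / x) - ((- (1 / x\<^sup>2)) * ln (1 - x) + (1 / x - 1) * (- 1 / (1 - x))))) (at x)"
    using assms by (auto intro!: derivative_eq_intros simp: power2_eq_square)
  moreover have "- (1 / x) - ((- (1 / x\<^sup>2)) * ln (1 - x) + (1 / x - 1) * (- 1 / (1 - x))) = ln (1 - x) / x\<^sup>2"
  proof -
    have "(1 / x - 1) * (- 1 / (1 - x)) = - 1 / x" using assms by (simp add: field_simps)
    then show ?thesis by (simp add: power2_eq_square)
  qed
  ultimately show ?thesis by simp
qed

lemma bin_entropy_ge_twice:
  assumes "0 \<le> x" "x \<le> 1/2"
  shows "bin_entropy x \<ge> 2 * x"
proof (cases "x = 0")
  case True
  then show ?thesis by (simp add: bin_entropy_def)
next
  case False
  then have x0: "x > 0" using assms by simp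
  \<comment> \<open>g y = ln 2 * bin_entropy y / y, which decreases to 2 ln 2 at y = 1/2\<close>
  define g where "g y = - ln y - (1 / y - 1) * ln (1 - y)" for y :: real
  have "g (1/2) \<le> g x"
  proof (rule DERIV_nonpos_imp_nonincreasing[OF assms(2)])
    fix y assume "x \<le> y" "y \<le> 1/2"
    then have y: "0 < y" "y < 1" using x0 by auto
    show "\<exists>D. (g has_real_derivative D) (at y) \<and> D \<le> 0"
      using entropy_ratio_has_derivative[OF y] y unfolding g_def
      by (intro exI[of _ "ln (1 - y) / y\<^sup>2"]) (auto intro!: divide_nonpos_nonneg)
  qed
  moreover have "g (1/2) = 2 * ln 2" by (simp add: g_def ln_div)
  ultimately have gx: "g x \<ge> 2 * ln 2" by simp
  have "bin_entropy x = (- x * ln x - (1 - x) * ln (1 - x)) / ln 2"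
    using x0 assms by (simp add: bin_entropy_def log_def diff_divide_distrib add_divide_distrib)
  also have "- x * ln x - (1 - x) * ln (1 - x) = x * g x"
    using x0 by (simp add: g_def field_simps)
  finally have "bin_entropy x = x * g x / ln 2" .
  moreover have "x * g x \<ge> x * (2 * ln 2)" using gx x0 by (intro mult_left_mono) auto
  ultimately have "bin_entropy x * ln 2 \<ge> (2 * x) * ln 2" by simp
  then show ?thesis by (simp add: mult_le_cancel_right_pos)
qed

lemma nat_le_three_halves_pow: "real k \<le> (3/2) ^ k"
proof (induction k)
  case 0
  then show ?case by simp
next
  case (Suc k)
  show ?case
  proof (cases "k \<le> 1")
    case True
    then consider "k = 0" | "k = 1" by linarith
    then show ?thesis by cases (simp_all add: power2_eq_square)
  next
    case False
    then have "real (Suc k) \<le> 3/2 * real k" by simp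
    also have "\<dots> \<le> 3/2 * (3/2) ^ k" using Suc.IH by simp
    finally show ?thesis by simp
  qed
qed

lemma card_nonempty_subsets_le:
  fixes W :: "'w set"
  assumes fW: "finite W" and n: "n \<ge> 1"
  shows "real (card {A. A \<subseteq> W \<and> A \<noteq> {} \<and> card A \<le> n}) \<le> (real n / 2 + 1) ^ card W"
proof (cases "n \<ge> 2")
  case True
  have "card {A. A \<subseteq> W \<and> A \<noteq> {} \<and> card A \<le> n} \<le> card (Pow W)"
    by (rule card_mono) (use fW in auto)
  then have "real (card {A. A \<subseteq> W \<and> A \<noteq> {} \<and> card A \<le> n}) \<le> 2 ^ card W"
    using fW by (simp add: card_Pow)
  also have "(2::real) ^ card W \<le> (real n / 2 + 1) ^ card W"
    using True by (intro power_mono) auto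
  finally show ?thesis .
next
  case False
  then have n1: "n = 1" using n by simp
  have sub: "{A. A \<subseteq> W \<and> A \<noteq> {} \<and> card A \<le> n} \<subseteq> (\<lambda>w. {w}) ` W"
  proof
    fix A assume A: "A \<in> {A. A \<subseteq> W \<and> A \<noteq> {} \<and> card A \<le> n}"
    then have "finite A" using fW finite_subset by auto
    then have "card A > 0" using A by (auto simp: card_gt_0_iff)
    then have "card A = 1" using A n1 by simp
    then obtain w where "A = {w}" by (auto simp: card_Suc_eq)
    then show "A \<in> (\<lambda>w. {w}) ` W" using A by auto
  qed
  have "card {A. A \<subseteq> W \<and> A \<noteq> {} \<and> card A \<le> n} \<le> card ((\<lambda>w. {w}) ` W)"
    by (rule card_mono[OF _ sub]) (use fW in simp)
  also have "\<dots> \<le> card W" by (rule card_image_le[OF fW])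
  finally have "real (card {A. A \<subseteq> W \<and> A \<noteq> {} \<and> card A \<le> n}) \<le> real (card W)" by simp
  also have "\<dots> \<le> (3/2) ^ card W" by (rule nat_le_three_halves_pow)
  also have "\<dots> = (real n / 2 + 1) ^ card W" using n1 by simp
  finally show ?thesis .
qed

lemma sum_binom_subsets:
  fixes \<rho> :: real
  shows "(\<Sum>S\<in>Pow {..<n}. \<rho> ^ card S * (1 - \<rho>) ^ (n - card S)) = 1"
proof -
  have "(1::real) = (\<Prod>i<n. \<rho> + (1 - \<rho>))" by simp
  also have "\<dots> = (\<Sum>X\<in>Pow {..<n}. (\<Prod>i\<in>X. \<rho>) * (\<Prod>i\<in>{..<n} - X. 1 - \<rho>))"
    by (rule prod_add) simp
  also have "\<dots> = (\<Sum>S\<in>Pow {..<n}. \<rho> ^ card S * (1 - \<rho>) ^ (n - card S))"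
  proof (intro sum.cong refl)
    fix X assume "X \<in> Pow {..<n}"
    then have "card ({..<n} - X) = n - card X" by (simp add: card_Diff_subset finite_subset)
    then show "(\<Prod>i\<in>X. \<rho>) * (\<Prod>i\<in>{..<n} - X. 1 - \<rho>) = \<rho> ^ card X * (1 - \<rho>) ^ (n - card X)" by simp
  qed
  finally show ?thesis by simp
qed

lemma binomial_weight_mono:
  fixes \<rho> :: real
  assumes \<rho>: "0 \<le> \<rho>" "\<rho> \<le> 1/2" and k: "k \<le> r" and r: "r \<le> n"
  shows "\<rho> ^ r * (1 - \<rho>) ^ (n - r) \<le> \<rho> ^ k * (1 - \<rho>) ^ (n - k)"
proof -
  have "\<rho> ^ r * (1 - \<rho>) ^ (n - r) = \<rho> ^ k * \<rho> ^ (r - k) * (1 - \<rho>) ^ (n - r)"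
    using k by (simp add: power_add[symmetric])
  also have "\<dots> \<le> \<rho> ^ k * (1 - \<rho>) ^ (r - k) * (1 - \<rho>) ^ (n - r)"
    using \<rho> by (intro mult_right_mono mult_left_mono power_mono) auto
  also have "\<dots> = \<rho> ^ k * (1 - \<rho>) ^ (n - k)"
    using k r by (simp add: mult.assoc power_add[symmetric])
  finally show ?thesis .
qed

lemma entropy_powr_eq_inverse_weight:
  fixes n r :: nat
  assumes r: "0 < r" "r < n"
  defines "\<rho> \<equiv> real r / real n"
  shows "2 powr (real n * bin_entropy \<rho>) = 1 / (\<rho> ^ r * (1 - \<rho>) ^ (n - r))"
proof -
  have n0: "real n > 0" using r by simp
  have \<rho>: "0 < \<rho>" "\<rho> < 1" using r by (auto simp: \<rho>_def field_simps)
  have "log 2 (1 / (\<rho> ^ r * (1 - \<rho>) ^ (n - r))) = - (real r * log 2 \<rho> + real (n - r) * log 2 (1 - \<rho>))"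
    using \<rho> by (simp add: log_divide log_mult log_nat_power)
  also have "\<dots> = real n * bin_entropy \<rho>"
  proof -
    have "real r = real n * \<rho>" using n0 by (simp add: \<rho>_def)
    moreover have "real (n - r) = real n * (1 - \<rho>)"
      using n0 r by (simp add: \<rho>_def field_simps of_nat_diff)
    ultimately show ?thesis using \<rho> by (simp add: bin_entropy_def algebra_simps)
  qed
  finally have "real n * bin_entropy \<rho> = log 2 (1 / (\<rho> ^ r * (1 - \<rho>) ^ (n - r)))" ..
  then show ?thesis using \<rho> by simp
qed

lemma card_small_subsets_le_entropy:
  fixes n r :: nat
  assumes rn: "2 * r \<le> n" and n: "n \<ge> 1"
  shows "real (card {S\<in>Pow {..<n}. card S \<le> r}) \<le> 2 powr (real n * bin_entropy (real r / real n))"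
proof (cases "r = 0")
  case True
  have "{S\<in>Pow {..<n}. card S \<le> r} = {{}}" using True by (auto simp: finite_subset)
  then show ?thesis using True by (simp add: bin_entropy_def)
next
  case False
  define \<rho> where "\<rho> = real r / real n"
  define F where "F = {S\<in>Pow {..<n}. card S \<le> r}"
  have \<rho>: "0 < \<rho>" "\<rho> \<le> 1/2" using False rn n by (auto simp: \<rho>_def field_simps)
  have c0: "\<rho> ^ r * (1 - \<rho>) ^ (n - r) > 0" using \<rho> by simp
  \<comment> \<open>each small subset carries at least the weight of a subset of size r
      in the binomial distribution with parameter r/n\<close>
  have "real (card F) * (\<rho> ^ r * (1 - \<rho>) ^ (n - r)) = (\<Sum>S\<in>F. \<rho> ^ r * (1 - \<rho>) ^ (n - r))"
    by simp
  also have "\<dots> \<le> (\<Sum>S\<in>F. \<rho> ^ card S * (1 - \<rho>) ^ (n - card S))"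
    using \<rho> rn by (intro sum_mono binomial_weight_mono) (auto simp: F_def)
  also have "\<dots> \<le> (\<Sum>S\<in>Pow {..<n}. \<rho> ^ card S * (1 - \<rho>) ^ (n - card S))"
    using \<rho> by (intro sum_mono2) (auto simp: F_def)
  also have "\<dots> = 1" by (rule sum_binom_subsets)
  finally have "real (card F) \<le> 1 / (\<rho> ^ r * (1 - \<rho>) ^ (n - r))"
    using c0 by (simp add: field_simps)
  also have "\<dots> = 2 powr (real n * bin_entropy \<rho>)"
    unfolding \<rho>_def using False rn by (intro entropy_powr_eq_inverse_weight[symmetric]) auto
  finally show ?thesis by (simp add: F_def \<rho>_def)
qed

lemma power_eq_2_powr: "y > 0 \<Longrightarrow> (y::real) ^ k = 2 powr (real k * log 2 y)"
proof -
  assume y: "y > 0"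
  have "2 powr (real k * log 2 y) = (2 powr (log 2 y)) powr real k" by (simp add: powr_powr mult.commute)
  also have "\<dots> = y powr real k" using y by simp
  also have "\<dots> = y ^ k" using y by (simp add: powr_realpow)
  finally show ?thesis by simp
qed

lemma exp_neg_le_2_powr_neg: "x \<ge> 0 \<Longrightarrow> exp (- x) \<le> 2 powr (- (x::real))"
proof -
  assume x: "x \<ge> 0"
  have "2 powr (- x) = exp (- x * ln 2)" by (simp add: powr_def mult.commute)
  moreover have "- x \<le> - x * ln 2" using x ln_2_less_1 by (simp add: mult_left_le)
  ultimately show ?thesis by simp
qed

section \<open>The deviation bound\<close>

lemma one_le_deviation_bound:
  fixes n r m :: nat and \<delta> :: real
  assumes n: "n \<ge> 1" and rn: "2 * r \<le> n" and small: "real n * (\<delta> / 2)\<^sup>2 \<le> 2 * real r"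
  shows "1 \<le> 2 powr (- real n * (\<delta>^2 / 4 - bin_entropy (real r / real n)) + real m * log 2 (real n / 2 + 1))"
proof -
  have n0: "real n > 0" using n by simp
  have "\<delta>^2 / 4 \<le> 2 * (real r / real n)"
    using small n0 by (simp add: field_simps power2_eq_square)
  also have "\<dots> \<le> bin_entropy (real r / real n)"
    by (rule bin_entropy_ge_twice) (use rn n0 in \<open>auto simp: field_simps\<close>)
  finally have "real n * (\<delta>^2 / 4 - bin_entropy (real r / real n)) \<le> 0"
    using n0 by (simp add: mult_nonneg_nonpos)
  moreover have "real m * log 2 (real n / 2 + 1) \<ge> 0" by simp
  ultimately have "0 \<le> - real n * (\<delta>^2 / 4 - bin_entropy (real r / real n)) + real m * log 2 (real n / 2 + 1)"
    by linarith
  then show ?thesis by (simp add: ge_one_powr_ge_zero)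
qed

lemma counting_le_deviation_bound:
  fixes W :: "'w set" and n r :: nat and \<delta> :: real
  assumes fW: "finite W" and n: "n \<ge> 1" and rn: "2 * r \<le> n"
  shows "real (card {S\<in>Pow {..<n}. card S \<le> r}) * real (card {A. A \<subseteq> W \<and> A \<noteq> {} \<and> card A \<le> n})
           * exp (- real n * (\<delta> / 2)\<^sup>2)
         \<le> 2 powr (- real n * (\<delta>^2 / 4 - bin_entropy (real r / real n)) + real (card W) * log 2 (real n / 2 + 1))"
proof -
  have "real (card {A. A \<subseteq> W \<and> A \<noteq> {} \<and> card A \<le> n}) \<le> (real n / 2 + 1) ^ card W"
    by (rule card_nonempty_subsets_le[OF fW n])
  also have "\<dots> = 2 powr (real (card W) * log 2 (real n / 2 + 1))" by (rule power_eq_2_powr) simp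
  finally have AA: "real (card {A. A \<subseteq> W \<and> A \<noteq> {} \<and> card A \<le> n})
      \<le> 2 powr (real (card W) * log 2 (real n / 2 + 1))" .
  have e: "exp (- real n * (\<delta> / 2)\<^sup>2) \<le> 2 powr (- real n * (\<delta>^2 / 4))"
    using exp_neg_le_2_powr_neg[of "real n * (\<delta> / 2)\<^sup>2"] by (simp add: power_divide)
  have "real (card {S\<in>Pow {..<n}. card S \<le> r}) * real (card {A. A \<subseteq> W \<and> A \<noteq> {} \<and> card A \<le> n})
           * exp (- real n * (\<delta> / 2)\<^sup>2)
      \<le> 2 powr (real n * bin_entropy (real r / real n)) * 2 powr (real (card W) * log 2 (real n / 2 + 1))
           * 2 powr (- real n * (\<delta>^2 / 4))"
    using card_small_subsets_le_entropy[OF rn n] AA e by (intro mult_mono) auto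
  also have "\<dots> = 2 powr (- real n * (\<delta>^2 / 4 - bin_entropy (real r / real n))
                   + real (card W) * log 2 (real n / 2 + 1))"
    by (simp add: powr_add[symmetric] algebra_simps)
  finally show ?thesis .
qed

lemma sum_born_prob_subset_le:
  assumes M: "is_POVM d W M" and B: "B \<subseteq> lists_of W n"
  shows "(\<Sum>ws\<in>B. born_prob d n M ws v) \<le> tensor_norm_sq d n v"
proof -
  have "(\<Sum>ws\<in>B. born_prob d n M ws v) \<le> (\<Sum>ws\<in>lists_of W n. born_prob d n M ws v)"
    using born_prob_nonneg[OF M] finite_lists_of[OF is_POVM_finite[OF M]] B by (intro sum_mono2) auto
  then show ?thesis unfolding sum_born_prob[OF M] .
qed

lemma born_prob_le_sum_proj:
  assumes M: "is_POVM d W M" and \<theta>: "hinner d \<theta> \<theta> = 1"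
    and sp: "in_tspan d n (Vset d \<theta> n r) \<phi>" and B: "B \<subseteq> lists_of W n"
  defines "F \<equiv> {S\<in>Pow {..<n}. card S \<le> r}"
  shows "(\<Sum>ws\<in>B. born_prob d n M ws \<phi>)
         \<le> real (card F) * (\<Sum>S\<in>F. \<Sum>ws\<in>B. born_prob d n M ws (tensor_op d n (proj_factor \<theta> S) \<phi>))"
proof -
  have fF: "finite F" by (simp add: F_def)
  have dec: "\<phi> ys = (\<Sum>S\<in>F. tensor_op d n (proj_factor \<theta> S) \<phi> ys)" if "ys \<in> idx d n" for ys
    unfolding F_def by (rule span_eq_sum_small_proj[OF \<theta> sp that])
  have "(\<Sum>ws\<in>B. born_prob d n M ws \<phi>)
      \<le> (\<Sum>ws\<in>B. real (card F) * (\<Sum>S\<in>F. born_prob d n M ws (tensor_op d n (proj_factor \<theta> S) \<phi>)))"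
    using B by (intro sum_mono born_prob_sum_le[OF M _ fF dec]) auto
  also have "\<dots> = real (card F) * (\<Sum>S\<in>F. \<Sum>ws\<in>B. born_prob d n M ws (tensor_op d n (proj_factor \<theta> S) \<phi>))"
    by (simp add: sum_distrib_left sum.swap[of _ F])
  finally show ?thesis .
qed

lemma bad_prob_almost_power_le:
  assumes M: "is_POVM d W M" and \<theta>: "hinner d \<theta> \<theta> = 1"
    and n: "n \<ge> 1" and rn: "2 * r \<le> n" and \<delta>: "\<delta> > 0"
    and sp: "in_tspan d n (Vset d \<theta> n r) \<phi>" and nrm: "tensor_norm_sq d n \<phi> = 1"
  shows "(\<Sum>ws\<in>atypical_words W n (outcome_dist d M \<theta>) \<delta>. born_prob d n M ws \<phi>)
         \<le> 2 powr (- real n * (\<delta>^2 / 4 - bin_entropy (real r / real n))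
                   + real (card W) * log 2 (real n / 2 + 1))"
proof (cases "real n * (\<delta> / 2)\<^sup>2 \<le> 2 * real r")
  case True
  then show ?thesis
    using sum_born_prob_subset_le[OF M atypical_words_subset[of W n "outcome_dist d M \<theta>" \<delta>], where v=\<phi>] nrm
      one_le_deviation_bound[OF n rn True, of "card W"] by linarith
next
  case False
  define F where "F = {S\<in>Pow {..<n}. card S \<le> r}"
  define a where "a S = tensor_op d n (proj_factor \<theta> S) \<phi>" for S
  define c where "c = real (card {A. A \<subseteq> W \<and> A \<noteq> {} \<and> card A \<le> n}) * exp (- real n * (\<delta> / 2)\<^sup>2)"
  define Bad where "Bad = atypical_words W n (outcome_dist d M \<theta>) \<delta>"
  have "(\<Sum>ws\<in>Bad. born_prob d n M ws \<phi>) \<le> real (card F) * (\<Sum>S\<in>F. \<Sum>ws\<in>Bad. born_prob d n M ws (a S))"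
    unfolding F_def a_def Bad_def by (rule born_prob_le_sum_proj[OF M \<theta> sp atypical_words_subset])
  also have "\<dots> \<le> real (card F) * (\<Sum>S\<in>F. c * tensor_norm_sq d n (a S))"
  proof (intro mult_left_mono sum_mono)
    fix S assume "S \<in> F"
    then have "S \<subseteq> {..<n}" "2 * card S \<le> n" "2 * real (card S) \<le> real n * (\<delta> / 2)\<^sup>2"
      using False rn by (auto simp: F_def)
    then show "(\<Sum>ws\<in>Bad. born_prob d n M ws (a S)) \<le> c * tensor_norm_sq d n (a S)"
      unfolding Bad_def c_def a_def using bad_prob_proj_le[OF M \<theta> _ n \<delta>] by blast
  qed simp
  also have "\<dots> = real (card F) * c * (\<Sum>S\<in>F. tensor_norm_sq d n (a S))"
    by (simp add: sum_distrib_left mult.assoc)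
  also have "\<dots> \<le> real (card F) * c * (\<Sum>S\<in>Pow {..<n}. tensor_norm_sq d n (a S))"
    by (intro mult_left_mono sum_mono2) (auto simp: F_def c_def tensor_norm_sq_nonneg)
  also have "(\<Sum>S\<in>Pow {..<n}. tensor_norm_sq d n (a S)) = 1"
    unfolding a_def using sum_tensor_norm_sq_proj[OF \<theta>] nrm by simp
  also have "real (card F) * c * 1
      \<le> 2 powr (- real n * (\<delta>^2 / 4 - bin_entropy (real r / real n)) + real (card W) * log 2 (real n / 2 + 1))"
    unfolding F_def c_def using counting_le_deviation_bound[OF is_POVM_finite[OF M] n rn]
    by (simp add: mult.assoc)
  finally show ?thesis unfolding Bad_def .
qed

lemma tensor_norm_sq_eq_tinner: "of_real (tensor_norm_sq d n v) = tinner d n v v"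
  unfolding tensor_norm_sq_def tinner_def of_real_sum
  by (intro sum.cong refl) (simp add: complex_norm_square[symmetric] mult.commute)

theorem corollary1:
  fixes d n r :: nat and \<theta> :: "nat \<Rightarrow> complex"
    and W :: "'w set" and M :: "'w \<Rightarrow> nat \<Rightarrow> nat \<Rightarrow> complex"
    and K :: "'k set" and p :: "'k \<Rightarrow> real" and \<phi> :: "'k \<Rightarrow> nat list \<Rightarrow> complex"
    and \<delta> :: real
  assumes "d \<ge> 1"
    and "hinner d \<theta> \<theta> = 1"
    and "n \<ge> 1" and "2 * r \<le> n"
    and "finite K" and "\<forall>k\<in>K. p k \<ge> 0" and "(\<Sum>k\<in>K. p k) = 1"
    and "\<forall>k\<in>K. \<phi> k \<in> almost_power d \<theta> n r \<and> tinner d n (\<phi> k) (\<phi> k) = 1"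
    and "is_POVM d W M"
    and "\<delta> > 0"
  shows "(\<Sum>ws\<in>{ws. length ws = n \<and> set ws \<subseteq> W \<and>
                    l1_dist W (outcome_dist d M \<theta>) (rel_freq ws) > \<delta>}.
            \<Sum>k\<in>K. p k * born_prob d n M ws (\<phi> k))
         \<le> 2 powr (- real n * (\<delta>^2 / 4 - bin_entropy (real r / real n))
                   + real (card W) * log 2 (real n / 2 + 1))"
proof -
  define bound where "bound = 2 powr (- real n * (\<delta>^2 / 4 - bin_entropy (real r / real n))
                   + real (card W) * log 2 (real n / 2 + 1))"
  define Bad where "Bad = atypical_words W n (outcome_dist d M \<theta>) \<delta>"
  have pure: "(\<Sum>ws\<in>Bad. born_prob d n M ws (\<phi> k)) \<le> bound" if k: "k \<in> K" for k
  proof -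
    have "in_tspan d n (Vset d \<theta> n r) (\<phi> k)" "tensor_norm_sq d n (\<phi> k) = 1"
      using assms(8) k tensor_norm_sq_eq_tinner[of d n "\<phi> k"] by (auto simp: almost_power_def)
    then show ?thesis
      using bad_prob_almost_power_le[OF assms(9,2,3,4,10)] unfolding Bad_def bound_def by blast
  qed
  have "(\<Sum>ws\<in>Bad. \<Sum>k\<in>K. p k * born_prob d n M ws (\<phi> k)) = (\<Sum>k\<in>K. p k * (\<Sum>ws\<in>Bad. born_prob d n M ws (\<phi> k)))"
    by (simp add: sum_distrib_left sum.swap[of _ K])
  also have "\<dots> \<le> (\<Sum>k\<in>K. p k * bound)"
    using pure assms(6) by (intro sum_mono mult_left_mono) auto
  also have "\<dots> = bound" using assms(7) by (simp flip: sum_distrib_right)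
  finally show ?thesis unfolding Bad_def bound_def atypical_words_def .
qed

end
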